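(* Let $\mathcal C$ be a parsummable category and fix an injection $\phi\colon\omega\times\omega\to\omega$. Then $S_{\mathcal C}\colon\Theta(\mathcal C)\to\mathcal C$ (described below) is a well-defined functor, and it preserves sums.
   Context: Let $\omega=\{1,2,\dots\}$, $\mathbf m=\{1,\dots,m\}$, $\mathcal M$ the monoid of injections $\omega\to\omega$. A parsummable category is a small $E\mathcal M$-category (strict action of the chaotic category on $\mathcal M$; $u_*$ the action, $[v,u]\colon u_*\Rightarrow v_*$) all of whose objects have finite support (intersection of finite $A\subset\omega$ with $u_*X=X$ for all $u$ fixing $A$ pointwise), with an object $0$ of empty support and a strictly unital, associative, commutative, equivariant sum $+$ on the full subcategory $\mathcal C\boxtimes\mathcal C$ of disjointly supported pairs. For a finite set $A$, injections $\phi,\phi'\colon A\times\omega\to\omega$ and $X_\bullet=(X_a)_{a\in A}$: $\phi_*(X_\bullet)=\sum_a\phi(a,-)_*(X_a)$, $[\phi',\phi]_{X_\bullet}=\sum_a[\phi'(a,-),\phi(a,-)]_{X_a}$. $\Sigma(\mathcal C)$ is the permutative category with objects finite sequences of objects of $\mathcal C$ (unit $\epsilon$ the empty sequence), morphisms $(X_1,\dots,X_m)\to(Y_1,\dots,Y_n)$ classes $[\psi,f,\phi]$ (injections $\phi\colon\mathbf m\times\omega\to\omega$, $\psi\colon\mathbf n\times\omega\to\omega$, $f\colon\phi_*(X_\bullet)\to\psi_*(Y_\bullet)$) modulo $(\psi,f,\phi)\sim(\psi',[\psi',\psi]f[\phi,\phi'],\phi')$; every morphism has a unique representative with prescribed $\phi,\psi$;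 composition $[\rho,g,\theta][\psi,f,\phi]=[\rho,g[\theta,\psi]f,\phi]$; tensor product concatenation on objects and $[\psi,f,\phi]\otimes[\rho,g,\theta]=[\psi+\rho,f+g,\phi+\theta]$ for representatives with disjoint images ($(\phi+\theta)(i,x)=\phi(i,x)$ for $i\le m$, $\theta(i-m,x)$ otherwise); symmetry $[\bar\phi,\mathrm{id},\phi]$ with $\bar\phi(i,x)=\phi(i+m,x)$ for $i\le n$, $\phi(i-n,x)$ otherwise. For a small permutative category $\mathscr P$, $\Phi(\mathscr P)$ is the parsummable category with objects sequences $P=(P_1,P_2,\dots)$ with $P_i=\mathbf 1$ for almost all $i$, morphisms $P\to Q$ the morphisms $\bigotimes_{i\in\omega}P_i\to\bigotimes_{i\in\omega}Q_i$ in $\mathscr P$ (ordered tensor of non-unit entries), support $\{i:P_i\ne\mathbf1\}$, sum of disjointly supported objects by merging entries, and sum of morphisms $f+g$ given by $f\otimes g$ conjugated with the coherence isomorphisms associated to the tautological bijections $\mathrm{supp}(P)\amalg\mathrm{supp}(P')\to\mathrm{supp}(P)\cup\mathrm{supp}(P')$ (the disjoint union ordered with the first summand before the second). $\Theta(\mathcal C)$ is the full parsummable subcategory of $\Phi\Sigma(\mathcal C)$ on sequences each of whose entries is $\epsilon$ or a $1$-tuple. For finite $A\subset\omega$ and $X_\bullet=(X_a)_{a\in A}$ in $\mathcal C$, $\langle A,X_\bullet\rangle\in\Theta(\mathcal C)$ has $i$-th entry $(X_i)$ for $i\in A$ and $\epsilon$ otherwise; every object is uniquely of this form, $\mathrm{supp}\langle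 A,X_\bullet\rangle=A$, and $\langle A,X_\bullet\rangle+\langle B,Y_\bullet\rangle=\langle A\cup B,X_\bullet+Y_\bullet\rangle$ for $A\cap B=\varnothing$. Let $\kappa_A\colon\{1,\dots,|A|\}\to A$ be the order-preserving bijection and $\kappa_A^*X_\bullet=(X_{\kappa_A(1)},\dots,X_{\kappa_A(|A|)})$; a morphism $\langle A,X_\bullet\rangle\to\langle B,Y_\bullet\rangle$ in $\Theta(\mathcal C)$ is a morphism $\kappa_A^*X_\bullet\to\kappa_B^*Y_\bullet$ in $\Sigma(\mathcal C)$. $S_{\mathcal C}$: on objects $S_{\mathcal C}\langle A,X_\bullet\rangle=(\phi|_A)_*(X_\bullet)$, where $\phi|_A$ is the restriction of $\phi$ to $A\times\omega$; a morphism $\alpha\colon\langle A,X_\bullet\rangle\to\langle B,Y_\bullet\rangle$ has a unique representative of the form $(\phi|_B\circ(\kappa_B\times\mathrm{id}),f,\phi|_A\circ(\kappa_A\times\mathrm{id}))$ and $S_{\mathcal C}(\alpha)=f$. A functor $G$ between parsummable categories preserves sums if $G(0)=0$, $G\times G$ maps disjointly supported pairs to disjointly supported pairs, and $G$ commutes with $+$ on objects and morphisms. *)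

theory Defs
  imports Main "HOL-Library.Nat_Bijection"
begin

text \<open>Conventions: omega = {1,2,...} is modelled by the type nat (shift n |-> n-1),
  and the finite set m = {1..m} by {..<m}.  All notions are invariant under this
  order-preserving relabelling.\<close>

record ('o,'m) cat =
  Ob  :: "'o set"
  Hom :: "'o \<Rightarrow> 'o \<Rightarrow> 'm set"
  cmp :: "'m \<Rightarrow> 'm \<Rightarrow> 'm"    (* cmp g f = g o f *)
  ide :: "'o \<Rightarrow> 'm"

definition is_category :: "('o,'m,'z) cat_scheme \<Rightarrow> bool" where
  "is_category C \<longleftrightarrow>
     (\<forall>X\<in>Ob C. ide C X \<in> Hom C X X) \<and>
     (\<forall>X\<in>Ob C. \<forall>Y\<in>Ob C. \<forall>Z\<in>Ob C. \<forall>f\<in>Hom C X Y. \<forall>g\<in>Hom C Y Z.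
        cmp C g f \<in> Hom C X Z) \<and>
     (\<forall>X\<in>Ob C. \<forall>Y\<in>Ob C. \<forall>f\<in>Hom C X Y.
        cmp C (ide C Y) f = f \<and> cmp C f (ide C X) = f) \<and>
     (\<forall>W\<in>Ob C. \<forall>X\<in>Ob C. \<forall>Y\<in>Ob C. \<forall>Z\<in>Ob C.
        \<forall>f\<in>Hom C W X. \<forall>g\<in>Hom C X Y. \<forall>h\<in>Hom C Y Z.
        cmp C h (cmp C g f) = cmp C (cmp C h g) f)"

definition is_functor ::
  "('a,'b,'x) cat_scheme \<Rightarrow> ('o,'m,'z) cat_scheme \<Rightarrow> ('a \<Rightarrow> 'o) \<Rightarrow> ('b \<Rightarrow> 'm) \<Rightarrow> bool" where
  "is_functor D C F Fm \<longleftrightarrow>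
     (\<forall>X\<in>Ob D. F X \<in> Ob C) \<and>
     (\<forall>X\<in>Ob D. \<forall>Y\<in>Ob D. \<forall>f\<in>Hom D X Y. Fm f \<in> Hom C (F X) (F Y)) \<and>
     (\<forall>X\<in>Ob D. Fm (ide D X) = ide C (F X)) \<and>
     (\<forall>X\<in>Ob D. \<forall>Y\<in>Ob D. \<forall>Z\<in>Ob D. \<forall>f\<in>Hom D X Y. \<forall>g\<in>Hom D Y Z.
        Fm (cmp D g f) = cmp C (Fm g) (Fm f))"

text \<open>Categories with a zero object and a (partially defined) sum; sums are only
  meaningful on disjointly supported pairs.\<close>
record ('o,'m) sumcat = "('o,'m) cat" +
  zro :: 'o
  plO :: "'o \<Rightarrow> 'o \<Rightarrow> 'o"
  plM :: "'m \<Rightarrow> 'm \<Rightarrow> 'm"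

text \<open>E M-categories: actM v u f is the image of the morphism ((v <- u), f) of
  E M x C under the action functor; so u_* f = actM u u f and
  [v,u]_X = actM v u (ide X).\<close>
record ('o,'m) pcat = "('o,'m) sumcat" +
  actO :: "(nat \<Rightarrow> nat) \<Rightarrow> 'o \<Rightarrow> 'o"
  actM :: "(nat \<Rightarrow> nat) \<Rightarrow> (nat \<Rightarrow> nat) \<Rightarrow> 'm \<Rightarrow> 'm"

definition supported_on :: "('o,'m,'z) pcat_scheme \<Rightarrow> nat set \<Rightarrow> 'o \<Rightarrow> bool" where
  "supported_on C A X \<longleftrightarrow> (\<forall>u. inj u \<longrightarrow> (\<forall>a\<in>A. u a = a) \<longrightarrow> actO C u X = X)"

definition supp :: "('o,'m,'z) pcat_scheme \<Rightarrow> 'o \<Rightarrow> nat set" where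
  "supp C X = \<Inter>{A. finite A \<and> supported_on C A X}"

definition disj :: "('o,'m,'z) pcat_scheme \<Rightarrow> 'o \<Rightarrow> 'o \<Rightarrow> bool" where
  "disj C X Y \<longleftrightarrow> supp C X \<inter> supp C Y = {}"

definition parsummable :: "('o,'m,'z) pcat_scheme \<Rightarrow> bool" where
  "parsummable C \<longleftrightarrow>
     is_category C \<and>
     \<comment> \<open>strict action of the chaotic category E M\<close>
     (\<forall>u. inj u \<longrightarrow> (\<forall>X\<in>Ob C. actO C u X \<in> Ob C)) \<and>
     (\<forall>u v. inj u \<longrightarrow> inj v \<longrightarrow> (\<forall>X\<in>Ob C. \<forall>Y\<in>Ob C. \<forall>f\<in>Hom C X Y.
        actM C v u f \<in> Hom C (actO C u X) (actO C v Y))) \<and>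
     (\<forall>u. inj u \<longrightarrow> (\<forall>X\<in>Ob C. actM C u u (ide C X) = ide C (actO C u X))) \<and>
     (\<forall>u v w. inj u \<longrightarrow> inj v \<longrightarrow> inj w \<longrightarrow>
        (\<forall>X\<in>Ob C. \<forall>Y\<in>Ob C. \<forall>Z\<in>Ob C. \<forall>f\<in>Hom C X Y. \<forall>g\<in>Hom C Y Z.
          cmp C (actM C w v g) (actM C v u f) = actM C w u (cmp C g f))) \<and>
     (\<forall>X\<in>Ob C. actO C id X = X) \<and>
     (\<forall>X\<in>Ob C. \<forall>Y\<in>Ob C. \<forall>f\<in>Hom C X Y. actM C id id f = f) \<and>
     (\<forall>u u'. inj u \<longrightarrow> inj u' \<longrightarrow> (\<forall>X\<in>Ob C. actO C u (actO C u' X) = actO C (u \<circ> u') X)) \<and>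
     (\<forall>u u' v v'. inj u \<longrightarrow> inj u' \<longrightarrow> inj v \<longrightarrow> inj v' \<longrightarrow>
        (\<forall>X\<in>Ob C. \<forall>Y\<in>Ob C. \<forall>f\<in>Hom C X Y.
          actM C v u (actM C v' u' f) = actM C (v \<circ> v') (u \<circ> u') f)) \<and>
     \<comment> \<open>finite support\<close>
     (\<forall>X\<in>Ob C. \<exists>A. finite A \<and> supported_on C A X) \<and>
     \<comment> \<open>zero object\<close>
     zro C \<in> Ob C \<and> supp C (zro C) = {} \<and>
     \<comment> \<open>sum functor on C box C\<close>
     (\<forall>X\<in>Ob C. \<forall>Y\<in>Ob C. disj C X Y \<longrightarrow> plO C X Y \<in> Ob C) \<and>
     (\<forall>X\<in>Ob C. \<forall>Y\<in>Ob C. \<forall>X'\<in>Ob C. \<forall>Y'\<in>Ob C. \<forall>f\<in>Hom C X Y. \<forall>g\<in>Hom C X' Y'.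
        disj C X X' \<longrightarrow> disj C Y Y' \<longrightarrow> plM C f g \<in> Hom C (plO C X X') (plO C Y Y')) \<and>
     (\<forall>X\<in>Ob C. \<forall>X'\<in>Ob C. disj C X X' \<longrightarrow>
        plM C (ide C X) (ide C X') = ide C (plO C X X')) \<and>
     (\<forall>X\<in>Ob C. \<forall>Y\<in>Ob C. \<forall>Z\<in>Ob C. \<forall>X'\<in>Ob C. \<forall>Y'\<in>Ob C. \<forall>Z'\<in>Ob C.
        \<forall>f\<in>Hom C X Y. \<forall>g\<in>Hom C Y Z. \<forall>f'\<in>Hom C X' Y'. \<forall>g'\<in>Hom C Y' Z'.
        disj C X X' \<longrightarrow> disj C Y Y' \<longrightarrow> disj C Z Z' \<longrightarrow>
        plM C (cmp C g f) (cmp C g' f') = cmp C (plM C g g') (plM C f f')) \<and>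
     \<comment> \<open>strictly unital\<close>
     (\<forall>X\<in>Ob C. plO C X (zro C) = X) \<and>
     (\<forall>X\<in>Ob C. \<forall>Y\<in>Ob C. \<forall>f\<in>Hom C X Y. plM C f (ide C (zro C)) = f) \<and>
     \<comment> \<open>associative\<close>
     (\<forall>X\<in>Ob C. \<forall>Y\<in>Ob C. \<forall>Z\<in>Ob C. disj C X Y \<longrightarrow> disj C X Z \<longrightarrow> disj C Y Z \<longrightarrow>
        plO C (plO C X Y) Z = plO C X (plO C Y Z)) \<and>
     (\<forall>X\<in>Ob C. \<forall>Y\<in>Ob C. \<forall>Z\<in>Ob C. \<forall>X'\<in>Ob C. \<forall>Y'\<in>Ob C. \<forall>Z'\<in>Ob C.
        \<forall>f\<in>Hom C X X'. \<forall>g\<in>Hom C Y Y'. \<forall>h\<in>Hom C Z Z'.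
        disj C X Y \<longrightarrow> disj C X Z \<longrightarrow> disj C Y Z \<longrightarrow>
        disj C X' Y' \<longrightarrow> disj C X' Z' \<longrightarrow> disj C Y' Z' \<longrightarrow>
        plM C (plM C f g) h = plM C f (plM C g h)) \<and>
     \<comment> \<open>commutative\<close>
     (\<forall>X\<in>Ob C. \<forall>Y\<in>Ob C. disj C X Y \<longrightarrow> plO C X Y = plO C Y X) \<and>
     (\<forall>X\<in>Ob C. \<forall>Y\<in>Ob C. \<forall>X'\<in>Ob C. \<forall>Y'\<in>Ob C. \<forall>f\<in>Hom C X Y. \<forall>g\<in>Hom C X' Y'.
        disj C X X' \<longrightarrow> disj C Y Y' \<longrightarrow> plM C f g = plM C g f) \<and>
     \<comment> \<open>equivariant\<close>
     (\<forall>u. inj u \<longrightarrow> (\<forall>X\<in>Ob C. \<forall>Y\<in>Ob C. disj C X Y \<longrightarrow>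
        actO C u (plO C X Y) = plO C (actO C u X) (actO C u Y))) \<and>
     (\<forall>u v. inj u \<longrightarrow> inj v \<longrightarrow>
        (\<forall>X\<in>Ob C. \<forall>Y\<in>Ob C. \<forall>X'\<in>Ob C. \<forall>Y'\<in>Ob C. \<forall>f\<in>Hom C X Y. \<forall>g\<in>Hom C X' Y'.
        disj C X X' \<longrightarrow> disj C Y Y' \<longrightarrow>
        actM C v u (plM C f g) = plM C (actM C v u f) (actM C v u g)))"

definition preserves_sums ::
  "('a,'b,'x) sumcat_scheme \<Rightarrow> ('a \<Rightarrow> nat set) \<Rightarrow>
   ('o,'m,'z) sumcat_scheme \<Rightarrow> ('o \<Rightarrow> nat set) \<Rightarrow> ('a \<Rightarrow> 'o) \<Rightarrow> ('b \<Rightarrow> 'm) \<Rightarrow> bool" where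
  "preserves_sums D suppD C suppC G Gm \<longleftrightarrow>
     G (zro D) = zro C \<and>
     (\<forall>X\<in>Ob D. \<forall>Y\<in>Ob D. suppD X \<inter> suppD Y = {} \<longrightarrow>
        suppC (G X) \<inter> suppC (G Y) = {} \<and> G (plO D X Y) = plO C (G X) (G Y)) \<and>
     (\<forall>X\<in>Ob D. \<forall>Y\<in>Ob D. \<forall>X'\<in>Ob D. \<forall>Y'\<in>Ob D. \<forall>f\<in>Hom D X Y. \<forall>g\<in>Hom D X' Y'.
        suppD X \<inter> suppD X' = {} \<longrightarrow> suppD Y \<inter> suppD Y' = {} \<longrightarrow>
        Gm (plM D f g) = plM C (Gm f) (Gm g))"

fun sumO :: "('o,'m,'z) pcat_scheme \<Rightarrow> 'o list \<Rightarrow> 'o" where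
  "sumO C [] = zro C"
| "sumO C (x # xs) = plO C x (sumO C xs)"

fun sumM :: "('o,'m,'z) pcat_scheme \<Rightarrow> 'm list \<Rightarrow> 'm" where
  "sumM C [] = ide C (zro C)"
| "sumM C (f # fs) = plM C f (sumM C fs)"

text \<open>Injections m x omega -> omega are curried functions phi with phi i = phi(i,-).\<close>
definition inj_m :: "nat \<Rightarrow> (nat \<Rightarrow> nat \<Rightarrow> nat) \<Rightarrow> bool" where
  "inj_m m \<phi> \<longleftrightarrow> inj_on (\<lambda>(i,x). \<phi> i x) ({..<m} \<times> UNIV)"

definition img_m :: "nat \<Rightarrow> (nat \<Rightarrow> nat \<Rightarrow> nat) \<Rightarrow> nat set" where
  "img_m m \<phi> = (\<lambda>(i,x). \<phi> i x) ` ({..<m} \<times> UNIV)"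

definition pstar :: "('o,'m,'z) pcat_scheme \<Rightarrow> (nat \<Rightarrow> nat \<Rightarrow> nat) \<Rightarrow> 'o list \<Rightarrow> 'o" where
  "pstar C \<phi> Xs = sumO C (map (\<lambda>i. actO C (\<phi> i) (Xs ! i)) [0..<length Xs])"

definition brk :: "('o,'m,'z) pcat_scheme \<Rightarrow> (nat \<Rightarrow> nat \<Rightarrow> nat) \<Rightarrow> (nat \<Rightarrow> nat \<Rightarrow> nat) \<Rightarrow> 'o list \<Rightarrow> 'm" where
  "brk C \<phi>' \<phi> Xs = sumM C (map (\<lambda>i. actM C (\<phi>' i) (\<phi> i) (ide C (Xs ! i))) [0..<length Xs])"

section \<open>The permutative category Sigma(C)\<close>

type_synonym 'm srep = "(nat \<Rightarrow> nat \<Rightarrow> nat) \<times> 'm \<times> (nat \<Rightarrow> nat \<Rightarrow> nat)"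
type_synonym ('o,'m) smor = "'o list \<times> 'o list \<times> 'm srep set"

definition rep_ok :: "('o,'m,'z) pcat_scheme \<Rightarrow> 'o list \<Rightarrow> 'o list \<Rightarrow> 'm srep \<Rightarrow> bool" where
  "rep_ok C Xs Ys t \<longleftrightarrow> (case t of (\<psi>, f, \<phi>) \<Rightarrow>
     inj_m (length Xs) \<phi> \<and> inj_m (length Ys) \<psi> \<and> f \<in> Hom C (pstar C \<phi> Xs) (pstar C \<psi> Ys))"

definition srel :: "('o,'m,'z) pcat_scheme \<Rightarrow> 'o list \<Rightarrow> 'o list \<Rightarrow> 'm srep \<Rightarrow> 'm srep \<Rightarrow> bool" where
  "srel C Xs Ys t t' \<longleftrightarrow> (case t of (\<psi>, f, \<phi>) \<Rightarrow> case t' of (\<psi>', f', \<phi>') \<Rightarrow>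
     f' = cmp C (brk C \<psi>' \<psi> Ys) (cmp C f (brk C \<phi> \<phi>' Xs)))"

definition scls :: "('o,'m,'z) pcat_scheme \<Rightarrow> 'o list \<Rightarrow> 'o list \<Rightarrow> 'm srep \<Rightarrow> 'm srep set" where
  "scls C Xs Ys t = {t'. rep_ok C Xs Ys t' \<and> srel C Xs Ys t t'}"

definition SHom :: "('o,'m,'z) pcat_scheme \<Rightarrow> 'o list \<Rightarrow> 'o list \<Rightarrow> ('o,'m) smor set" where
  "SHom C Xs Ys = {(Xs, Ys, scls C Xs Ys t) | t. rep_ok C Xs Ys t}"

definition can :: "nat \<Rightarrow> nat \<Rightarrow> nat" where
  "can i x = prod_encode (i, x)"

definition sid :: "('o,'m,'z) pcat_scheme \<Rightarrow> 'o list \<Rightarrow> ('o,'m) smor" where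
  "sid C Xs = (Xs, Xs, scls C Xs Xs (can, ide C (pstar C can Xs), can))"

definition scomp :: "('o,'m,'z) pcat_scheme \<Rightarrow> ('o,'m) smor \<Rightarrow> ('o,'m) smor \<Rightarrow> ('o,'m) smor" where
  "scomp C b a = (case a of (Xs, Ys, \<alpha>) \<Rightarrow> case b of (Ys', Zs, \<beta>) \<Rightarrow>
     (case SOME t. t \<in> \<alpha> of (\<psi>, f, \<phi>) \<Rightarrow> case SOME t. t \<in> \<beta> of (\<rho>, g, \<theta>) \<Rightarrow>
       (Xs, Zs, scls C Xs Zs (\<rho>, cmp C g (cmp C (brk C \<theta> \<psi> Ys) f), \<phi>))))"

definition padd :: "nat \<Rightarrow> (nat \<Rightarrow> nat \<Rightarrow> nat) \<Rightarrow> (nat \<Rightarrow> nat \<Rightarrow> nat) \<Rightarrow> nat \<Rightarrow> nat \<Rightarrow> nat" where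
  "padd m \<phi> \<theta> = (\<lambda>i x. if i < m then \<phi> i x else \<theta> (i - m) x)"

definition stensor :: "('o,'m,'z) pcat_scheme \<Rightarrow> ('o,'m) smor \<Rightarrow> ('o,'m) smor \<Rightarrow> ('o,'m) smor" where
  "stensor C a b = (case a of (Xs, Ys, \<alpha>) \<Rightarrow> case b of (Xs', Ys', \<beta>) \<Rightarrow>
     (case SOME p. fst p \<in> \<alpha> \<and> snd p \<in> \<beta> \<and>
          (case p of ((\<psi>, f, \<phi>), (\<rho>, g, \<theta>)) \<Rightarrow>
             img_m (length Xs) \<phi> \<inter> img_m (length Xs') \<theta> = {} \<and>
             img_m (length Ys) \<psi> \<inter> img_m (length Ys') \<rho> = {}) of
      ((\<psi>, f, \<phi>), (\<rho>, g, \<theta>)) \<Rightarrow>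
        (Xs @ Xs', Ys @ Ys', scls C (Xs @ Xs') (Ys @ Ys')
           (padd (length Ys) \<psi> \<rho>, plM C f g, padd (length Xs) \<phi> \<theta>))))"

section \<open>Theta(C), the full subcategory of Phi Sigma(C)\<close>

text \<open>Objects of Phi Sigma(C) are sequences of objects of Sigma(C), i.e. of lists.\<close>
type_synonym 'o tobj = "nat \<Rightarrow> 'o list"
type_synonym ('o,'m) tmor = "'o tobj \<times> 'o tobj \<times> ('o,'m) smor"

definition tsupp :: "'o tobj \<Rightarrow> nat set" where
  "tsupp P = {i. P i \<noteq> []}"

definition theta_obj :: "('o,'m,'z) pcat_scheme \<Rightarrow> 'o tobj \<Rightarrow> bool" where
  "theta_obj C P \<longleftrightarrow> finite (tsupp P) \<and> (\<forall>i. P i = [] \<or> (\<exists>x\<in>Ob C. P i = [x]))"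

text \<open>kappa_A: order-preserving bijection {..<|A|} -> A; pos A a is its inverse\<close>
definition kappa :: "nat set \<Rightarrow> nat \<Rightarrow> nat" where
  "kappa A i = sorted_list_of_set A ! i"

definition pos :: "nat set \<Rightarrow> nat \<Rightarrow> nat" where
  "pos A a = card {b \<in> A. b < a}"

definition tens :: "'o tobj \<Rightarrow> 'o list" where
  "tens P = concat (map P (sorted_list_of_set (tsupp P)))"

definition tplO :: "'o tobj \<Rightarrow> 'o tobj \<Rightarrow> 'o tobj" where
  "tplO P Q = (\<lambda>i. P i @ Q i)"

text \<open>Coherence isomorphism in Sigma(C) associated with the tautological bijection
  supp P II supp P' -> supp P u supp P' (all blocks being 1-tuples): it is the
  permutation isomorphism [psi, id, psi o (tau x id)], where tau sends a position
  of tens P @ tens P' to the position of the same element of omega in supp P u supp P'.\<close>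
definition ttau :: "'o tobj \<Rightarrow> 'o tobj \<Rightarrow> nat \<Rightarrow> nat" where
  "ttau P P' j = pos (tsupp P \<union> tsupp P')
      ((sorted_list_of_set (tsupp P) @ sorted_list_of_set (tsupp P')) ! j)"

definition coh :: "('o,'m,'z) pcat_scheme \<Rightarrow> 'o tobj \<Rightarrow> 'o tobj \<Rightarrow> ('o,'m) smor" where
  "coh C P P' = (tens P @ tens P', tens (tplO P P'),
     scls C (tens P @ tens P') (tens (tplO P P'))
       (can, ide C (pstar C can (tens (tplO P P'))), \<lambda>j. can (ttau P P' j)))"

definition cohinv :: "('o,'m,'z) pcat_scheme \<Rightarrow> 'o tobj \<Rightarrow> 'o tobj \<Rightarrow> ('o,'m) smor" where
  "cohinv C P P' = (tens (tplO P P'), tens P @ tens P',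
     scls C (tens (tplO P P')) (tens P @ tens P')
       (\<lambda>j. can (ttau P P' j), ide C (pstar C can (tens (tplO P P'))), can))"

definition tplM :: "('o,'m,'z) pcat_scheme \<Rightarrow> ('o,'m) tmor \<Rightarrow> ('o,'m) tmor \<Rightarrow> ('o,'m) tmor" where
  "tplM C a b = (case a of (P, Q, s) \<Rightarrow> case b of (P', Q', s') \<Rightarrow>
     (tplO P P', tplO Q Q',
      scomp C (coh C Q Q') (scomp C (stensor C s s') (cohinv C P P'))))"

definition Theta :: "('o,'m,'z) pcat_scheme \<Rightarrow> ('o tobj, ('o,'m) tmor) sumcat" where
  "Theta C = \<lparr> Ob = {P. theta_obj C P},
     Hom = (\<lambda>P Q. {(P, Q, s) | s. s \<in> SHom C (tens P) (tens Q)}),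
     cmp = (\<lambda>b a. case a of (P, Q, s) \<Rightarrow> case b of (Q', R, t) \<Rightarrow> (P, R, scomp C t s)),
     ide = (\<lambda>P. (P, P, sid C (tens P))),
     zro = (\<lambda>i. []),
     plO = tplO,
     plM = tplM C \<rparr>"

definition S_obj :: "('o,'m,'z) pcat_scheme \<Rightarrow> (nat \<Rightarrow> nat \<Rightarrow> nat) \<Rightarrow> 'o tobj \<Rightarrow> 'o" where
  "S_obj C \<phi> P = sumO C (map (\<lambda>a. actO C (\<phi> a) (hd (P a))) (sorted_list_of_set (tsupp P)))"

definition S_rep_src :: "(nat \<Rightarrow> nat \<Rightarrow> nat) \<Rightarrow> 'o tobj \<Rightarrow> nat \<Rightarrow> nat \<Rightarrow> nat" where
  "S_rep_src \<phi> P = (\<lambda>i x. \<phi> (kappa (tsupp P) i) x)"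

definition S_mor :: "('o,'m,'z) pcat_scheme \<Rightarrow> (nat \<Rightarrow> nat \<Rightarrow> nat) \<Rightarrow> ('o,'m) tmor \<Rightarrow> 'm" where
  "S_mor C \<phi> a = (case a of (P, Q, (Xs, Ys, \<alpha>)) \<Rightarrow>
     THE f. (S_rep_src \<phi> Q, f, S_rep_src \<phi> P) \<in> \<alpha>)"

end

theory Submission
  imports Defs "HOL-Library.Infinite_Set"
begin

text \<open>A morphism of \<Sigma>(C) is a class of triples (\<psi>, f, \<phi>), and since the brackets
  [\<phi>', \<phi>] compose like the morphisms of the chaotic category E\<M>, every class has
  exactly one member (\<psi>', [\<psi>', \<psi>] f [\<phi>, \<phi>'], \<phi>') at any prescribed indices \<phi>', \<psi>'.
  S picks the member at the indices determined by \<phi> and the supports.  Composition and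
  tensor product in \<Sigma>(C) may be computed on arbitrary representatives; on
  representatives with matching indices the brackets in the composition formula are
  identities, so S is a functor.  On objects, \<phi>_* of a concatenation is the sum of \<phi>_* of
  the two halves, and these are disjointly supported because supp (u_* X) \<subseteq> im u.  The
  coherence isomorphisms of \<Phi> only permute blocks, so after reindexing along that
  permutation they become identities at the indices used by S, and S preserves sums of
  morphisms as well.\<close>

locale parsummable_category =
  fixes C :: "('o,'m,'z) pcat_scheme"
  assumes parsummable: "parsummable C"
begin

lemma ide_in_hom [rule_format]: "\<forall>X\<in>Ob C. ide C X \<in> Hom C X X"
  using parsummable unfolding parsummable_def is_category_def by (elim conjE) assumption

lemma cmp_in_hom [rule_format]:
  "\<forall>X\<in>Ob C. \<forall>Y\<in>Ob C. \<forall>Z\<in>Ob C. \<forall>f\<in>Hom C X Y. \<forall>g\<in>Hom C Y Z. cmp C g f \<in> Hom C X Z"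
  using parsummable unfolding parsummable_def is_category_def by (elim conjE) assumption

lemma cmp_ide [rule_format]:
  "\<forall>X\<in>Ob C. \<forall>Y\<in>Ob C. \<forall>f\<in>Hom C X Y. cmp C (ide C Y) f = f \<and> cmp C f (ide C X) = f"
  using parsummable unfolding parsummable_def is_category_def by (elim conjE) assumption

lemma cmp_ide_left: "\<lbrakk>X \<in> Ob C; Y \<in> Ob C; f \<in> Hom C X Y\<rbrakk> \<Longrightarrow> cmp C (ide C Y) f = f"
  and cmp_ide_right: "\<lbrakk>X \<in> Ob C; Y \<in> Ob C; f \<in> Hom C X Y\<rbrakk> \<Longrightarrow> cmp C f (ide C X) = f"
  using cmp_ide by auto

lemma cmp_assoc [rule_format]:
  "\<forall>W\<in>Ob C. \<forall>X\<in>Ob C. \<forall>Y\<in>Ob C. \<forall>Z\<in>Ob C. \<forall>f\<in>Hom C W X. \<forall>g\<in>Hom C X Y. \<forall>h\<in>Hom C Y Z.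
     cmp C h (cmp C g f) = cmp C (cmp C h g) f"
  using parsummable unfolding parsummable_def is_category_def by (elim conjE) assumption

lemma actO_in_Ob [rule_format]: "\<forall>u. inj u \<longrightarrow> (\<forall>X\<in>Ob C. actO C u X \<in> Ob C)"
  using parsummable unfolding parsummable_def by (elim conjE) assumption

lemma actM_in_hom [rule_format]:
  "\<forall>u v. inj u \<longrightarrow> inj v \<longrightarrow> (\<forall>X\<in>Ob C. \<forall>Y\<in>Ob C. \<forall>f\<in>Hom C X Y.
     actM C v u f \<in> Hom C (actO C u X) (actO C v Y))"
  using parsummable unfolding parsummable_def by (elim conjE) assumption

lemma actM_ide [rule_format]:
  "\<forall>u. inj u \<longrightarrow> (\<forall>X\<in>Ob C. actM C u u (ide C X) = ide C (actO C u X))"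
  using parsummable unfolding parsummable_def by (elim conjE) assumption

lemma actM_cmp [rule_format]:
  "\<forall>u v w. inj u \<longrightarrow> inj v \<longrightarrow> inj w \<longrightarrow>
     (\<forall>X\<in>Ob C. \<forall>Y\<in>Ob C. \<forall>Z\<in>Ob C. \<forall>f\<in>Hom C X Y. \<forall>g\<in>Hom C Y Z.
       cmp C (actM C w v g) (actM C v u f) = actM C w u (cmp C g f))"
  using parsummable unfolding parsummable_def by (elim conjE) assumption

lemma actO_comp [rule_format]:
  "\<forall>u u'. inj u \<longrightarrow> inj u' \<longrightarrow> (\<forall>X\<in>Ob C. actO C u (actO C u' X) = actO C (u \<circ> u') X)"
  using parsummable unfolding parsummable_def by (elim conjE) assumption

lemma finite_support [rule_format]: "\<forall>X\<in>Ob C. \<exists>A. finite A \<and> supported_on C A X"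
  using parsummable unfolding parsummable_def by (elim conjE) assumption

lemma zro_in_Ob: "zro C \<in> Ob C"
  using parsummable unfolding parsummable_def by (elim conjE) assumption

lemma supp_zro: "supp C (zro C) = {}"
  using parsummable unfolding parsummable_def by (elim conjE) assumption

lemma plO_in_Ob [rule_format]: "\<forall>X\<in>Ob C. \<forall>Y\<in>Ob C. Defs.disj C X Y \<longrightarrow> plO C X Y \<in> Ob C"
  using parsummable unfolding parsummable_def by (elim conjE) assumption

lemma plM_in_hom [rule_format]:
  "\<forall>X\<in>Ob C. \<forall>Y\<in>Ob C. \<forall>X'\<in>Ob C. \<forall>Y'\<in>Ob C. \<forall>f\<in>Hom C X Y. \<forall>g\<in>Hom C X' Y'.
     Defs.disj C X X' \<longrightarrow> Defs.disj C Y Y' \<longrightarrow> plM C f g \<in> Hom C (plO C X X') (plO C Y Y')"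
  using parsummable unfolding parsummable_def by (elim conjE) assumption

lemma plM_ide [rule_format]:
  "\<forall>X\<in>Ob C. \<forall>X'\<in>Ob C. Defs.disj C X X' \<longrightarrow> plM C (ide C X) (ide C X') = ide C (plO C X X')"
  using parsummable unfolding parsummable_def by (elim conjE) assumption

lemma plM_cmp [rule_format]:
  "\<forall>X\<in>Ob C. \<forall>Y\<in>Ob C. \<forall>Z\<in>Ob C. \<forall>X'\<in>Ob C. \<forall>Y'\<in>Ob C. \<forall>Z'\<in>Ob C.
     \<forall>f\<in>Hom C X Y. \<forall>g\<in>Hom C Y Z. \<forall>f'\<in>Hom C X' Y'. \<forall>g'\<in>Hom C Y' Z'.
     Defs.disj C X X' \<longrightarrow> Defs.disj C Y Y' \<longrightarrow> Defs.disj C Z Z' \<longrightarrow>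
     plM C (cmp C g f) (cmp C g' f') = cmp C (plM C g g') (plM C f f')"
  using parsummable unfolding parsummable_def by (elim conjE) assumption

lemma plO_zro [rule_format]: "\<forall>X\<in>Ob C. plO C X (zro C) = X"
  using parsummable unfolding parsummable_def by (elim conjE) assumption

lemma plM_zro [rule_format]: "\<forall>X\<in>Ob C. \<forall>Y\<in>Ob C. \<forall>f\<in>Hom C X Y. plM C f (ide C (zro C)) = f"
  using parsummable unfolding parsummable_def by (elim conjE) assumption

lemma plO_assoc [rule_format]:
  "\<forall>X\<in>Ob C. \<forall>Y\<in>Ob C. \<forall>Z\<in>Ob C. Defs.disj C X Y \<longrightarrow> Defs.disj C X Z \<longrightarrow> Defs.disj C Y Z \<longrightarrow>
     plO C (plO C X Y) Z = plO C X (plO C Y Z)"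
  using parsummable unfolding parsummable_def by (elim conjE) assumption

lemma plM_assoc [rule_format]:
  "\<forall>X\<in>Ob C. \<forall>Y\<in>Ob C. \<forall>Z\<in>Ob C. \<forall>X'\<in>Ob C. \<forall>Y'\<in>Ob C. \<forall>Z'\<in>Ob C.
     \<forall>f\<in>Hom C X X'. \<forall>g\<in>Hom C Y Y'. \<forall>h\<in>Hom C Z Z'.
     Defs.disj C X Y \<longrightarrow> Defs.disj C X Z \<longrightarrow> Defs.disj C Y Z \<longrightarrow>
     Defs.disj C X' Y' \<longrightarrow> Defs.disj C X' Z' \<longrightarrow> Defs.disj C Y' Z' \<longrightarrow>
     plM C (plM C f g) h = plM C f (plM C g h)"
  using parsummable unfolding parsummable_def by (elim conjE) assumption

lemma plO_commute [rule_format]: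
  "\<forall>X\<in>Ob C. \<forall>Y\<in>Ob C. Defs.disj C X Y \<longrightarrow> plO C X Y = plO C Y X"
  using parsummable unfolding parsummable_def by (elim conjE) assumption

lemma plM_commute [rule_format]:
  "\<forall>X\<in>Ob C. \<forall>Y\<in>Ob C. \<forall>X'\<in>Ob C. \<forall>Y'\<in>Ob C. \<forall>f\<in>Hom C X Y. \<forall>g\<in>Hom C X' Y'.
     Defs.disj C X X' \<longrightarrow> Defs.disj C Y Y' \<longrightarrow> plM C f g = plM C g f"
  using parsummable unfolding parsummable_def by (elim conjE) assumption

lemma actO_plO [rule_format]:
  "\<forall>u. inj u \<longrightarrow> (\<forall>X\<in>Ob C. \<forall>Y\<in>Ob C. Defs.disj C X Y \<longrightarrow>
     actO C u (plO C X Y) = plO C (actO C u X) (actO C u Y))"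
  using parsummable unfolding parsummable_def by (elim conjE) assumption

lemma disj_sym: "Defs.disj C X Y \<Longrightarrow> Defs.disj C Y X"
  unfolding disj_def by blast

lemma disj_zro: "Defs.disj C X (zro C)" "Defs.disj C (zro C) X"
  unfolding disj_def by (auto simp: supp_zro)

lemma plO_zro_left: "X \<in> Ob C \<Longrightarrow> plO C (zro C) X = X"
  using plO_commute[OF zro_in_Ob, of X] disj_zro plO_zro by simp

lemma plM_zro_left: "\<lbrakk>X \<in> Ob C; Y \<in> Ob C; f \<in> Hom C X Y\<rbrakk> \<Longrightarrow> plM C (ide C (zro C)) f = f"
  using plM_commute[OF zro_in_Ob zro_in_Ob, of X Y "ide C (zro C)" f] disj_zro plM_zro ide_in_hom zro_in_Ob
  by simp

end

section \<open>Supports\<close>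

lemma inj_if_disjoint_ranges:
  assumes "inj_on f A" "inj g" "\<And>a x. a \<in> A \<Longrightarrow> f a \<noteq> g x"
  shows "inj (\<lambda>x. if x \<in> A then f x else g x)"
proof (rule injI)
  fix x y assume "(if x \<in> A then f x else g x) = (if y \<in> A then f y else g y)"
  then show "x = y"
    using assms(3)[of x y] assms(3)[of y x] inj_onD[OF assms(1), of x y] injD[OF assms(2), of x y]
    by (auto split: if_splits)
qed

lemma lift_through_inj:
  assumes v: "inj v" and e: "inj e" "range e \<subseteq> v ` (- A)"
  obtains r where "inj r" "\<forall>a\<in>A. r a = a" "\<And>x. x \<notin> A \<Longrightarrow> v (r x) = e x"
proof -
  have ve: "v (inv v (e x)) = e x" "inv v (e x) \<notin> A" for x
    using e(2) inv_f_f[OF v] by (fastforce dest: range_subsetD[of _ _ x])+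
  have "inj (\<lambda>x. inv v (e x))"
    by (rule injI) (metis ve(1) injD[OF e(1)])
  then have "inj (\<lambda>x. if x \<in> A then x else inv v (e x))"
    by (rule inj_if_disjoint_ranges[OF inj_on_id2]) (use ve(2) in auto)
  then show ?thesis
    using that[of "\<lambda>x. if x \<in> A then x else inv v (e x)"] ve(1) by simp
qed

lemma supp_subset: "\<lbrakk>finite A; supported_on C A X\<rbrakk> \<Longrightarrow> supp C X \<subseteq> A"
  unfolding supp_def by blast

lemma infinite_image_Compl: "\<lbrakk>inj u; finite (A :: nat set)\<rbrakk> \<Longrightarrow> infinite (u ` (- A))"
  by (metis finite_imageD inj_on_subset subset_UNIV finite_compl infinite_UNIV_nat)

context parsummable_category
begin

text \<open>Both u and u' become equal after precomposition with injections fixing A, obtained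
  by lifting an enumeration of the common image through u and u'.\<close>
lemma actO_eq_if_common_image:
  assumes X: "X \<in> Ob C" and sA: "supported_on C A X" and u: "inj u" and u': "inj u'"
    and agree: "\<forall>a\<in>A. u a = u' a" and common: "infinite (u ` (- A) \<inter> u' ` (- A))"
  shows "actO C u X = actO C u' X"
proof -
  define e where "e = enumerate (u ` (- A) \<inter> u' ` (- A))"
  have "e n \<in> u ` (- A) \<inter> u' ` (- A)" for n
    unfolding e_def by (rule enumerate_in_set[OF common])
  then have e: "inj e" "range e \<subseteq> u ` (- A)" "range e \<subseteq> u' ` (- A)"
    using inj_enumerate[OF common] unfolding e_def by auto
  obtain r where r: "inj r" "\<forall>a\<in>A. r a = a" "\<And>x. x \<notin> A \<Longrightarrow> u (r x) = e x"
    using lift_through_inj[OF u e(1,2)] by blast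
  obtain r' where r': "inj r'" "\<forall>a\<in>A. r' a = a" "\<And>x. x \<notin> A \<Longrightarrow> u' (r' x) = e x"
    using lift_through_inj[OF u' e(1,3)] by blast
  have "actO C r X = X" "actO C r' X = X"
    using sA r(1,2) r'(1,2) unfolding supported_on_def by auto
  moreover have "u \<circ> r = u' \<circ> r'"
  proof
    fix x show "(u \<circ> r) x = (u' \<circ> r') x"
      using agree r(2,3) r'(2,3) by (cases "x \<in> A") auto
  qed
  ultimately show ?thesis
    using actO_comp[OF u r(1) X] actO_comp[OF u' r'(1) X] by metis
qed

text \<open>u and u' are compared through an intermediate injection whose image outside the
  support meets the images of both infinitely often.\<close>
lemma actO_eq_if_agree_on_support:
  assumes X: "X \<in> Ob C" and A: "finite A" "supported_on C A X" and u: "inj u" and u': "inj u'"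
    and agree: "\<forall>a\<in>A. u a = u' a"
  shows "actO C u X = actO C u' X"
proof -
  define K where "K = u ` (- A) \<union> u' ` (- A)"
  have K: "infinite K" unfolding K_def using infinite_image_Compl[OF u A(1)] by simp
  define w where "w x = (if x \<in> A then u x else enumerate K x)" for x
  have uK: "u a \<notin> K" if "a \<in> A" for a
  proof
    assume "u a \<in> K"
    then consider b where "b \<notin> A" "u a = u b" | b where "b \<notin> A" "u a = u' b"
      unfolding K_def by blast
    then show False
    proof cases
      case (1 b)
      then show False using that injD[OF u, of a b] by blast
    next
      case (2 b)
      then have "u' a = u' b" using agree that by simp
      then show False using that 2 injD[OF u', of a b] by blast
    qed
  qed
  have w: "inj w"
    unfolding w_def[abs_def]
  proof (rule inj_if_disjoint_ranges[OF inj_on_subset[OF u] inj_enumerate[OF K]])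
    show "u a \<noteq> enumerate K x" if "a \<in> A" for a x
      using uK[OF that] enumerate_in_set[OF K, of x] by auto
  qed simp
  have "K - enumerate K ` A \<subseteq> w ` (- A)"
  proof
    fix k assume k: "k \<in> K - enumerate K ` A"
    then obtain x where "k = enumerate K x" using range_enumerate[OF K] by blast
    with k show "k \<in> w ` (- A)" unfolding w_def by auto
  qed
  then have sub: "v ` (- A) - enumerate K ` A \<subseteq> v ` (- A) \<inter> w ` (- A)" if "v = u \<or> v = u'" for v
    using that unfolding K_def by blast
  have inf: "infinite (v ` (- A) - enumerate K ` A)" if "inj v" for v
    using infinite_image_Compl[OF that A(1)] A(1) by simp
  have "infinite (u ` (- A) \<inter> w ` (- A))"
    using finite_subset[OF sub] inf[OF u] by blast
  moreover have "infinite (w ` (- A) \<inter> u' ` (- A))"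
    using finite_subset[OF sub] inf[OF u'] by (auto simp: Int_commute)
  ultimately show ?thesis
    using actO_eq_if_common_image[OF X A(2) u w] actO_eq_if_common_image[OF X A(2) w u']
    by (simp add: w_def agree)
qed

lemma supp_actO_subset: assumes X: "X \<in> Ob C" and u: "inj u" shows "supp C (actO C u X) \<subseteq> range u"
proof -
  obtain A where A: "finite A" "supported_on C A X" using finite_support[OF X] by blast
  have "actO C v (actO C u X) = actO C u X" if v: "inj v" "\<forall>b\<in>u ` A. v b = b" for v
    using actO_comp[OF v(1) u X] actO_eq_if_agree_on_support[OF X A inj_compose[OF v(1) u] u] v(2)
    by simp
  then have "supported_on C (u ` A) (actO C u X)" unfolding supported_on_def by blast
  then have "supp C (actO C u X) \<subseteq> u ` A" using A(1) by (intro supp_subset) simp_all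
  then show ?thesis by blast
qed

lemma disj_actO:
  assumes "X \<in> Ob C" "Y \<in> Ob C" "inj u" "inj v" "range u \<inter> range v = {}"
  shows "Defs.disj C (actO C u X) (actO C v Y)"
  using supp_actO_subset[OF assms(1,3)] supp_actO_subset[OF assms(2,4)] assms(5)
  unfolding disj_def by blast

lemma supp_plO_subset:
  assumes X: "X \<in> Ob C" and Y: "Y \<in> Ob C" and d: "Defs.disj C X Y"
  shows "supp C (plO C X Y) \<subseteq> supp C X \<union> supp C Y"
proof
  fix x assume x: "x \<in> supp C (plO C X Y)"
  show "x \<in> supp C X \<union> supp C Y"
  proof (rule ccontr)
    assume "x \<notin> supp C X \<union> supp C Y"
    then obtain A B where A: "finite A" "supported_on C A X" "x \<notin> A"
      and B: "finite B" "supported_on C B Y" "x \<notin> B"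
      unfolding supp_def by auto
    have "supported_on C (A \<union> B) (plO C X Y)"
      unfolding supported_on_def
    proof (intro allI impI)
      fix v assume v: "inj v" "\<forall>a\<in>A \<union> B. v a = a"
      then have "actO C v X = X" "actO C v Y = Y" using A(2) B(2) unfolding supported_on_def by auto
      then show "actO C v (plO C X Y) = plO C X Y" using actO_plO[OF v(1) X Y d] by simp
    qed
    then have "supp C (plO C X Y) \<subseteq> A \<union> B" using A(1) B(1) by (intro supp_subset) simp_all
    then show False using x A(3) B(3) by blast
  qed
qed

section \<open>Finite sums of disjointly supported families\<close>

definition disj_family :: "'i set \<Rightarrow> ('i \<Rightarrow> 'o) \<Rightarrow> bool" where
  "disj_family I D \<longleftrightarrow> (\<forall>i\<in>I. D i \<in> Ob C) \<and> (\<forall>i\<in>I. \<forall>j\<in>I. i \<noteq> j \<longrightarrow> Defs.disj C (D i) (D j))"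

definition disj_family_hom :: "'i set \<Rightarrow> ('i \<Rightarrow> 'o) \<Rightarrow> ('i \<Rightarrow> 'o) \<Rightarrow> ('i \<Rightarrow> 'm) \<Rightarrow> bool" where
  "disj_family_hom I D E F \<longleftrightarrow> disj_family I D \<and> disj_family I E \<and> (\<forall>i\<in>I. F i \<in> Hom C (D i) (E i))"

lemma disj_family_in_Ob: "\<lbrakk>disj_family I D; i \<in> I\<rbrakk> \<Longrightarrow> D i \<in> Ob C"
  and disj_familyD: "\<lbrakk>disj_family I D; i \<in> I; j \<in> I; i \<noteq> j\<rbrakk> \<Longrightarrow> Defs.disj C (D i) (D j)"
  unfolding disj_family_def by blast+

lemma disj_family_homD:
  assumes "disj_family_hom I D E F"
  shows "disj_family I D" "disj_family I E" "i \<in> I \<Longrightarrow> F i \<in> Hom C (D i) (E i)"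
  using assms unfolding disj_family_hom_def by auto

lemma sumO_in_Ob_and_supp:
  assumes D: "disj_family I D" and "set is \<subseteq> I" "distinct is"
  shows "sumO C (map D is) \<in> Ob C \<and> supp C (sumO C (map D is)) \<subseteq> (\<Union>i\<in>set is. supp C (D i))"
  using assms(2,3)
proof (induction "is")
  case Nil then show ?case by (simp add: zro_in_Ob supp_zro)
next
  case (Cons i "is")
  then have IH: "sumO C (map D is) \<in> Ob C" "supp C (sumO C (map D is)) \<subseteq> (\<Union>i\<in>set is. supp C (D i))"
    by auto
  have Di: "D i \<in> Ob C" using Cons.prems D disj_family_in_Ob by auto
  have "\<forall>j\<in>set is. supp C (D i) \<inter> supp C (D j) = {}"
    using Cons.prems disj_familyD[OF D] unfolding disj_def by auto
  then have d: "Defs.disj C (D i) (sumO C (map D is))"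
    using IH(2) unfolding disj_def by blast
  show ?case using plO_in_Ob[OF Di IH(1) d] supp_plO_subset[OF Di IH(1) d] IH(2) by auto
qed

lemma sumO_in_Ob: "\<lbrakk>disj_family I D; set is \<subseteq> I; distinct is\<rbrakk> \<Longrightarrow> sumO C (map D is) \<in> Ob C"
  and supp_sumO_subset: "\<lbrakk>disj_family I D; set is \<subseteq> I; distinct is\<rbrakk>
    \<Longrightarrow> supp C (sumO C (map D is)) \<subseteq> (\<Union>i\<in>set is. supp C (D i))"
  using sumO_in_Ob_and_supp by blast+

lemma disj_sumO:
  assumes D: "disj_family I D" and "set is \<subseteq> I" "set js \<subseteq> I" "distinct is" "distinct js"
    "set is \<inter> set js = {}"
  shows "Defs.disj C (sumO C (map D is)) (sumO C (map D js))"
proof -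
  have "\<forall>i\<in>set is. \<forall>j\<in>set js. supp C (D i) \<inter> supp C (D j) = {}"
    using assms disj_familyD[OF D] unfolding disj_def by (metis disjoint_iff subsetD)
  then show ?thesis
    using supp_sumO_subset[OF D assms(2,4)] supp_sumO_subset[OF D assms(3,5)] unfolding disj_def by blast
qed

lemma disj_sumO_single:
  "\<lbrakk>disj_family I D; i \<in> I; set js \<subseteq> I; distinct js; i \<notin> set js\<rbrakk>
   \<Longrightarrow> Defs.disj C (D i) (sumO C (map D js))"
  using disj_sumO[of I D "[i]" js] by (simp add: plO_zro disj_family_in_Ob)

lemma plO_left_commute:
  "\<lbrakk>X \<in> Ob C; Y \<in> Ob C; Z \<in> Ob C; Defs.disj C X Y; Defs.disj C X Z; Defs.disj C Y Z\<rbrakk>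
   \<Longrightarrow> plO C X (plO C Y Z) = plO C Y (plO C X Z)"
  by (metis plO_assoc plO_commute disj_sym)

lemma sumO_append:
  assumes D: "disj_family I D" and "set is \<subseteq> I" "set js \<subseteq> I" "distinct (is @ js)"
  shows "sumO C (map D (is @ js)) = plO C (sumO C (map D is)) (sumO C (map D js))"
  using assms(2-)
proof (induction "is")
  case Nil then show ?case using plO_zro_left sumO_in_Ob[OF D] by simp
next
  case (Cons i "is")
  have Di: "D i \<in> Ob C" using Cons.prems D disj_family_in_Ob by auto
  have s: "sumO C (map D is) \<in> Ob C" "sumO C (map D js) \<in> Ob C"
    using Cons.prems sumO_in_Ob[OF D] by auto
  have d: "Defs.disj C (D i) (sumO C (map D is))" "Defs.disj C (D i) (sumO C (map D js))"
    "Defs.disj C (sumO C (map D is)) (sumO C (map D js))"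
    using Cons.prems disj_sumO_single[OF D] disj_sumO[OF D] by auto
  show ?case using Cons plO_assoc[OF Di s d] by simp
qed

lemma sumO_perm:
  assumes D: "disj_family I D" and "set is \<subseteq> I" "distinct is" "distinct js" "set js = set is"
  shows "sumO C (map D js) = sumO C (map D is)"
  using assms(2-)
proof (induction "is" arbitrary: js)
  case Nil then show ?case by simp
next
  case (Cons i "is")
  then obtain js1 js2 where js: "js = js1 @ i # js2" by (metis list.set_intros(1) split_list)
  have dj: "distinct (js1 @ js2)" "i \<notin> set js1" "i \<notin> set js2" "set js1 \<inter> set js2 = {}"
    "distinct js1" "distinct js2" and sj: "set js1 \<subseteq> I" "set js2 \<subseteq> I" "i \<in> I"
    using Cons.prems js by auto
  have set12: "set (js1 @ js2) = set is" using Cons.prems js by auto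
  have "sumO C (map D js) = plO C (sumO C (map D js1)) (sumO C (map D (i # js2)))"
    using sumO_append[OF D, of js1 "i # js2"] Cons.prems js sj by auto
  also have "\<dots> = plO C (D i) (plO C (sumO C (map D js1)) (sumO C (map D js2)))"
    using plO_left_commute[OF sumO_in_Ob[OF D sj(1) dj(5)] disj_family_in_Ob[OF D sj(3)]
        sumO_in_Ob[OF D sj(2) dj(6)]]
      disj_sumO_single[OF D sj(3)] disj_sumO[OF D sj(1,2)] dj sj
    by (simp add: disj_sym)
  also have "\<dots> = plO C (D i) (sumO C (map D is))"
    using sumO_append[OF D sj(1,2) dj(1)] Cons.IH[of "js1 @ js2"] Cons.prems dj set12 by auto
  finally show ?case by simp
qed

lemma sumM_in_hom:
  assumes F: "disj_family_hom I D E F" and "set is \<subseteq> I" "distinct is"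
  shows "sumM C (map F is) \<in> Hom C (sumO C (map D is)) (sumO C (map E is))"
  using assms(2,3)
proof (induction "is")
  case Nil then show ?case by (simp add: ide_in_hom zro_in_Ob)
next
  case (Cons i "is")
  note D = disj_family_homD(1)[OF F] and E = disj_family_homD(2)[OF F]
  show ?case
    using plM_in_hom[OF disj_family_in_Ob[OF D] disj_family_in_Ob[OF E] sumO_in_Ob[OF D]
        sumO_in_Ob[OF E] disj_family_homD(3)[OF F] Cons.IH disj_sumO_single[OF D]
        disj_sumO_single[OF E]] Cons.prems
    by auto
qed

lemma plM_left_commute:
  assumes "X \<in> Ob C" "Y \<in> Ob C" "Z \<in> Ob C" "X' \<in> Ob C" "Y' \<in> Ob C" "Z' \<in> Ob C"
    "f \<in> Hom C X X'" "g \<in> Hom C Y Y'" "h \<in> Hom C Z Z'"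
    "Defs.disj C X Y" "Defs.disj C X Z" "Defs.disj C Y Z"
    "Defs.disj C X' Y'" "Defs.disj C X' Z'" "Defs.disj C Y' Z'"
  shows "plM C f (plM C g h) = plM C g (plM C f h)"
proof -
  have "plM C f (plM C g h) = plM C (plM C f g) h"
    using plM_assoc[of X Y Z X' Y' Z' f g h] assms by simp
  also have "\<dots> = plM C (plM C g f) h"
    using plM_commute[of X X' Y Y' f g] assms by simp
  also have "\<dots> = plM C g (plM C f h)"
    using plM_assoc[of Y X Z Y' X' Z' g f h] assms by (simp add: disj_sym)
  finally show ?thesis .
qed

lemma sumM_append:
  assumes F: "disj_family_hom I D E F" and "set is \<subseteq> I" "set js \<subseteq> I" "distinct (is @ js)"
  shows "sumM C (map F (is @ js)) = plM C (sumM C (map F is)) (sumM C (map F js))"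
  using assms(2-)
proof (induction "is")
  case Nil
  note D = disj_family_homD(1)[OF F] and E = disj_family_homD(2)[OF F]
  from Nil show ?case
    using plM_zro_left[OF sumO_in_Ob[OF D] sumO_in_Ob[OF E] sumM_in_hom[OF F]] by simp
next
  case (Cons i "is")
  note D = disj_family_homD(1)[OF F] and E = disj_family_homD(2)[OF F]
  have i: "i \<in> I" and s: "set is \<subseteq> I" "set js \<subseteq> I" "distinct is" "distinct js"
    "i \<notin> set is" "i \<notin> set js" "set is \<inter> set js = {}"
    using Cons.prems by auto
  show ?case
    using Cons plM_assoc[OF disj_family_in_Ob[OF D i] sumO_in_Ob[OF D s(1,3)] sumO_in_Ob[OF D s(2,4)]
      disj_family_in_Ob[OF E i] sumO_in_Ob[OF E s(1,3)] sumO_in_Ob[OF E s(2,4)]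
      disj_family_homD(3)[OF F i] sumM_in_hom[OF F s(1,3)] sumM_in_hom[OF F s(2,4)]
      disj_sumO_single[OF D i s(1,3,5)] disj_sumO_single[OF D i s(2,4,6)] disj_sumO[OF D s(1,2,3,4,7)]
      disj_sumO_single[OF E i s(1,3,5)] disj_sumO_single[OF E i s(2,4,6)] disj_sumO[OF E s(1,2,3,4,7)]]
    by simp
qed

lemma sumM_perm:
  assumes F: "disj_family_hom I D E F" and "set is \<subseteq> I" "distinct is" "distinct js" "set js = set is"
  shows "sumM C (map F js) = sumM C (map F is)"
  using assms(2-)
proof (induction "is" arbitrary: js)
  case Nil then show ?case by simp
next
  case (Cons i "is")
  note D = disj_family_homD(1)[OF F] and E = disj_family_homD(2)[OF F]
  from Cons obtain js1 js2 where js: "js = js1 @ i # js2" by (metis list.set_intros(1) split_list)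
  have dj: "distinct (js1 @ js2)" "i \<notin> set js1" "i \<notin> set js2" "set js1 \<inter> set js2 = {}"
    "distinct js1" "distinct js2" and sj: "set js1 \<subseteq> I" "set js2 \<subseteq> I" "i \<in> I"
    using Cons.prems js by auto
  have set12: "set (js1 @ js2) = set is" using Cons.prems js by auto
  have "sumM C (map F js) = plM C (sumM C (map F js1)) (sumM C (map F (i # js2)))"
    using sumM_append[OF F, of js1 "i # js2"] Cons.prems js sj by auto
  also have "\<dots> = plM C (F i) (plM C (sumM C (map F js1)) (sumM C (map F js2)))"
    using plM_left_commute[OF sumO_in_Ob[OF D sj(1) dj(5)] disj_family_in_Ob[OF D sj(3)]
        sumO_in_Ob[OF D sj(2) dj(6)] sumO_in_Ob[OF E sj(1) dj(5)] disj_family_in_Ob[OF E sj(3)]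
        sumO_in_Ob[OF E sj(2) dj(6)] sumM_in_hom[OF F sj(1) dj(5)] disj_family_homD(3)[OF F sj(3)]
        sumM_in_hom[OF F sj(2) dj(6)]
        disj_sym[OF disj_sumO_single[OF D sj(3) sj(1) dj(5,2)]] disj_sumO[OF D sj(1,2) dj(5,6,4)]
        disj_sumO_single[OF D sj(3) sj(2) dj(6,3)]
        disj_sym[OF disj_sumO_single[OF E sj(3) sj(1) dj(5,2)]] disj_sumO[OF E sj(1,2) dj(5,6,4)]
        disj_sumO_single[OF E sj(3) sj(2) dj(6,3)]]
    by simp
  also have "\<dots> = plM C (F i) (sumM C (map F is))"
    using sumM_append[OF F sj(1,2) dj(1)] Cons.IH[of "js1 @ js2"] Cons.prems dj set12 by auto
  finally show ?case by simp
qed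

lemma sumM_ide:
  assumes D: "disj_family I D" and "set is \<subseteq> I" "distinct is"
  shows "sumM C (map (\<lambda>i. ide C (D i)) is) = ide C (sumO C (map D is))"
  using assms(2,3)
  by (induction "is") (auto simp: plM_ide[OF disj_family_in_Ob[OF D] sumO_in_Ob[OF D] disj_sumO_single[OF D]])

lemma sumM_cmp:
  assumes F: "disj_family_hom I D E F" and G: "disj_family_hom I E H G" and "set is \<subseteq> I" "distinct is"
  shows "sumM C (map (\<lambda>i. cmp C (G i) (F i)) is) = cmp C (sumM C (map G is)) (sumM C (map F is))"
  using assms(3,4)
proof (induction "is")
  case Nil then show ?case using cmp_ide_left[OF zro_in_Ob zro_in_Ob ide_in_hom[OF zro_in_Ob]] by simp
next
  case (Cons i "is")
  note D = disj_family_homD(1)[OF F] and E = disj_family_homD(2)[OF F] and H = disj_family_homD(2)[OF G]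
  have i: "i \<in> I" and s: "set is \<subseteq> I" "distinct is" "i \<notin> set is" using Cons.prems by auto
  show ?case
    using Cons plM_cmp[OF disj_family_in_Ob[OF D i] disj_family_in_Ob[OF E i] disj_family_in_Ob[OF H i]
      sumO_in_Ob[OF D s(1,2)] sumO_in_Ob[OF E s(1,2)] sumO_in_Ob[OF H s(1,2)]
      disj_family_homD(3)[OF F i] disj_family_homD(3)[OF G i] sumM_in_hom[OF F s(1,2)] sumM_in_hom[OF G s(1,2)]
      disj_sumO_single[OF D i s] disj_sumO_single[OF E i s] disj_sumO_single[OF H i s]]
    by simp
qed

end

section \<open>The objects \<phi>_* X and the brackets [\<phi>', \<phi>]\<close>

lemma inj_m_imp_inj:
  assumes "inj_m L \<psi>" "i < L"
  shows "inj (\<psi> i)"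
proof (rule injI)
  fix x y assume "\<psi> i x = \<psi> i y"
  then show "x = y" using inj_onD[OF assms(1)[unfolded inj_m_def], of "(i, x)" "(i, y)"] assms(2) by simp
qed

lemma inj_m_disjoint_ranges:
  assumes "inj_m L \<psi>" "i < L" "j < L" "i \<noteq> j"
  shows "range (\<psi> i) \<inter> range (\<psi> j) = {}"
proof (rule ccontr)
  assume "range (\<psi> i) \<inter> range (\<psi> j) \<noteq> {}"
  then obtain x y where "\<psi> i x = \<psi> j y" by blast
  then show False using inj_onD[OF assms(1)[unfolded inj_m_def], of "(i, x)" "(j, y)"] assms(2-4) by simp
qed

lemma inj_m_padd:
  assumes "inj_m m \<phi>" "inj_m m' \<theta>" "img_m m \<phi> \<inter> img_m m' \<theta> = {}"
  shows "inj_m (m + m') (padd m \<phi> \<theta>)"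
  unfolding inj_m_def
proof (rule inj_onI, clarsimp)
  fix i x j y assume ij: "i < m + m'" "j < m + m'" and eq: "padd m \<phi> \<theta> i x = padd m \<phi> \<theta> j y"
  have img: "\<phi> k z \<in> img_m m \<phi>" if "k < m" for k z
    using that unfolding img_m_def by force
  have img': "\<theta> (k - m) z \<in> img_m m' \<theta>" if "\<not> k < m" "k < m + m'" for k z
    using that unfolding img_m_def by force
  show "i = j \<and> x = y"
  proof (cases "i < m"; cases "j < m")
    assume "i < m" "j < m"
    then show ?thesis using eq inj_onD[OF assms(1)[unfolded inj_m_def], of "(i, x)" "(j, y)"]
      by (simp add: padd_def)
  next
    assume a: "\<not> i < m" "\<not> j < m"
    with ij have "i - m < m'" "j - m < m'" by auto
    with a eq inj_onD[OF assms(2)[unfolded inj_m_def], of "(i - m, x)" "(j - m, y)"]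
    show ?thesis by (auto simp: padd_def)
  next
    assume "i < m" "\<not> j < m"
    then have "\<phi> i x = \<theta> (j - m) y" using eq by (simp add: padd_def)
    then have "\<phi> i x \<in> img_m m \<phi> \<inter> img_m m' \<theta>"
      using img[OF \<open>i < m\<close>, of x] img'[OF \<open>\<not> j < m\<close> ij(2), of y] by simp
    then show ?thesis using assms(3) by simp
  next
    assume "\<not> i < m" "j < m"
    then have "\<theta> (i - m) x = \<phi> j y" using eq by (simp add: padd_def)
    then have "\<phi> j y \<in> img_m m \<phi> \<inter> img_m m' \<theta>"
      using img[OF \<open>j < m\<close>, of y] img'[OF \<open>\<not> i < m\<close> ij(1), of x] by simp
    then show ?thesis using assms(3) by simp
  qed
qed

lemma inj_m_permute:
  assumes "inj_m N \<psi>" "bij_betw \<mu> {..<N} {..<N}"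
  shows "inj_m N (\<lambda>j. \<psi> (\<mu> j))"
  unfolding inj_m_def
proof (rule inj_onI, clarsimp)
  fix j x k y assume jk: "j < N" "k < N" and eq: "\<psi> (\<mu> j) x = \<psi> (\<mu> k) y"
  have "\<mu> j < N" "\<mu> k < N" using jk assms(2) by (auto dest: bij_betw_apply)
  then have "\<mu> j = \<mu> k \<and> x = y"
    using eq inj_onD[OF assms(1)[unfolded inj_m_def], of "(\<mu> j, x)" "(\<mu> k, y)"] by simp
  then show "j = k \<and> x = y" using jk bij_betw_imp_inj_on[OF assms(2)] by (auto dest: inj_onD)
qed

lemma inj_m_can: "inj_m L can"
  unfolding inj_m_def can_def inj_on_def using prod_encode_eq by auto

lemma upt_add_split: "[0..<m + m'] = [0..<m] @ map (\<lambda>i. i + m) [0..<m']"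
  by (simp add: map_add_upt upt_add_eq_append[of 0 m m'] add.commute)

context parsummable_category
begin

lemma disj_family_pstar_summands:
  assumes \<psi>: "inj_m (length Xs) \<psi>" and Xs: "set Xs \<subseteq> Ob C"
  shows "disj_family {0..<length Xs} (\<lambda>i. actO C (\<psi> i) (Xs ! i))"
  unfolding disj_family_def
proof (intro conjI ballI impI)
  fix i assume "i \<in> {0..<length Xs}"
  then show "actO C (\<psi> i) (Xs ! i) \<in> Ob C" using Xs by (intro actO_in_Ob inj_m_imp_inj[OF \<psi>]) auto
next
  fix i j assume "i \<in> {0..<length Xs}" "j \<in> {0..<length Xs}" "i \<noteq> j"
  then show "Defs.disj C (actO C (\<psi> i) (Xs ! i)) (actO C (\<psi> j) (Xs ! j))"
    using Xs by (intro disj_actO inj_m_imp_inj[OF \<psi>] inj_m_disjoint_ranges[OF \<psi>]) auto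
qed

lemma disj_family_hom_brk_summands:
  assumes \<psi>: "inj_m (length Xs) \<psi>" and \<psi>': "inj_m (length Xs) \<psi>'" and Xs: "set Xs \<subseteq> Ob C"
  shows "disj_family_hom {0..<length Xs} (\<lambda>i. actO C (\<psi> i) (Xs ! i)) (\<lambda>i. actO C (\<psi>' i) (Xs ! i))
     (\<lambda>i. actM C (\<psi>' i) (\<psi> i) (ide C (Xs ! i)))"
  unfolding disj_family_hom_def
  using disj_family_pstar_summands[OF \<psi> Xs] disj_family_pstar_summands[OF \<psi>' Xs] Xs
    inj_m_imp_inj[OF \<psi>] inj_m_imp_inj[OF \<psi>']
  by (auto intro!: actM_in_hom ide_in_hom)

lemma pstar_in_Ob: "\<lbrakk>inj_m (length Xs) \<psi>; set Xs \<subseteq> Ob C\<rbrakk> \<Longrightarrow> pstar C \<psi> Xs \<in> Ob C"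
  unfolding pstar_def using sumO_in_Ob[OF disj_family_pstar_summands] by simp

lemma supp_pstar_subset:
  assumes \<psi>: "inj_m (length Xs) \<psi>" and Xs: "set Xs \<subseteq> Ob C"
  shows "supp C (pstar C \<psi> Xs) \<subseteq> img_m (length Xs) \<psi>"
proof -
  have "supp C (pstar C \<psi> Xs) \<subseteq> (\<Union>i<length Xs. supp C (actO C (\<psi> i) (Xs ! i)))"
    unfolding pstar_def using supp_sumO_subset[OF disj_family_pstar_summands[OF \<psi> Xs], of "[0..<length Xs]"]
    by (simp add: atLeast0LessThan)
  also have "\<dots> \<subseteq> (\<Union>i<length Xs. range (\<psi> i))"
    using Xs by (intro UN_mono supp_actO_subset inj_m_imp_inj[OF \<psi>]) auto
  also have "\<dots> = img_m (length Xs) \<psi>" unfolding img_m_def by auto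
  finally show ?thesis .
qed

lemma brk_in_hom:
  "\<lbrakk>inj_m (length Xs) \<psi>; inj_m (length Xs) \<psi>'; set Xs \<subseteq> Ob C\<rbrakk>
   \<Longrightarrow> brk C \<psi>' \<psi> Xs \<in> Hom C (pstar C \<psi> Xs) (pstar C \<psi>' Xs)"
  unfolding pstar_def brk_def using sumM_in_hom[OF disj_family_hom_brk_summands] by simp

lemma brk_cmp:
  assumes \<phi>: "inj_m (length Xs) \<phi>" and \<psi>: "inj_m (length Xs) \<psi>" and \<theta>: "inj_m (length Xs) \<theta>"
    and Xs: "set Xs \<subseteq> Ob C"
  shows "cmp C (brk C \<theta> \<psi> Xs) (brk C \<psi> \<phi> Xs) = brk C \<theta> \<phi> Xs"
proof -
  have "actM C (\<theta> i) (\<phi> i) (ide C (Xs ! i))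
      = cmp C (actM C (\<theta> i) (\<psi> i) (ide C (Xs ! i))) (actM C (\<psi> i) (\<phi> i) (ide C (Xs ! i)))"
    if i: "i < length Xs" for i
  proof -
    have X: "Xs ! i \<in> Ob C" using i Xs by auto
    show ?thesis
      using actM_cmp[OF inj_m_imp_inj[OF \<phi> i] inj_m_imp_inj[OF \<psi> i] inj_m_imp_inj[OF \<theta> i] X X X
          ide_in_hom[OF X] ide_in_hom[OF X]] cmp_ide_left[OF X X ide_in_hom[OF X]]
      by simp
  qed
  then have "brk C \<theta> \<phi> Xs = sumM C (map (\<lambda>i. cmp C (actM C (\<theta> i) (\<psi> i) (ide C (Xs ! i)))
      (actM C (\<psi> i) (\<phi> i) (ide C (Xs ! i)))) [0..<length Xs])"
    unfolding brk_def by (intro arg_cong[where f="sumM C"] map_cong) auto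
  also have "\<dots> = cmp C (brk C \<theta> \<psi> Xs) (brk C \<psi> \<phi> Xs)"
    unfolding brk_def
    using sumM_cmp[OF disj_family_hom_brk_summands[OF \<phi> \<psi> Xs] disj_family_hom_brk_summands[OF \<psi> \<theta> Xs]]
    by simp
  finally show ?thesis by simp
qed

lemma brk_self:
  assumes \<phi>: "inj_m (length Xs) \<phi>" and Xs: "set Xs \<subseteq> Ob C"
  shows "brk C \<phi> \<phi> Xs = ide C (pstar C \<phi> Xs)"
proof -
  have "brk C \<phi> \<phi> Xs = sumM C (map (\<lambda>i. ide C (actO C (\<phi> i) (Xs ! i))) [0..<length Xs])"
    unfolding brk_def using Xs
    by (intro arg_cong[where f="sumM C"] map_cong) (auto intro!: actM_ide inj_m_imp_inj[OF \<phi>])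
  also have "\<dots> = ide C (pstar C \<phi> Xs)"
    unfolding pstar_def using sumM_ide[OF disj_family_pstar_summands[OF \<phi> Xs]] by simp
  finally show ?thesis .
qed

lemma pstar_cong: "(\<And>i. i < length Xs \<Longrightarrow> \<psi> i = \<psi>' i) \<Longrightarrow> pstar C \<psi> Xs = pstar C \<psi>' Xs"
  unfolding pstar_def by (intro arg_cong[where f="sumO C"] map_cong) auto

lemma brk_cong:
  "\<lbrakk>\<And>i. i < length Xs \<Longrightarrow> \<psi> i = \<psi>' i; \<And>i. i < length Xs \<Longrightarrow> \<phi> i = \<phi>' i\<rbrakk>
   \<Longrightarrow> brk C \<psi> \<phi> Xs = brk C \<psi>' \<phi>' Xs"
  unfolding brk_def by (intro arg_cong[where f="sumM C"] map_cong) auto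

lemma pstar_append:
  assumes Xs: "set Xs \<subseteq> Ob C" and Xs': "set Xs' \<subseteq> Ob C"
    and \<phi>: "inj_m (length Xs) \<phi>" and \<theta>: "inj_m (length Xs') \<theta>"
    and d: "img_m (length Xs) \<phi> \<inter> img_m (length Xs') \<theta> = {}"
  shows "pstar C (padd (length Xs) \<phi> \<theta>) (Xs @ Xs') = plO C (pstar C \<phi> Xs) (pstar C \<theta> Xs')"
proof -
  let ?m = "length Xs" and ?m' = "length Xs'"
  define D where "D i = actO C (padd ?m \<phi> \<theta> i) ((Xs @ Xs') ! i)" for i
  have D: "disj_family {0..<length (Xs @ Xs')} D"
    unfolding D_def using Xs Xs' inj_m_padd[OF \<phi> \<theta> d] by (intro disj_family_pstar_summands) auto
  have "pstar C (padd ?m \<phi> \<theta>) (Xs @ Xs') = sumO C (map D ([0..<?m] @ map (\<lambda>i. i + ?m) [0..<?m']))"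
    unfolding pstar_def D_def by (simp add: upt_add_split[symmetric])
  also have "\<dots> = plO C (sumO C (map D [0..<?m])) (sumO C (map D (map (\<lambda>i. i + ?m) [0..<?m'])))"
    by (rule sumO_append[OF D]) (auto simp: distinct_map inj_on_def)
  also have "sumO C (map D [0..<?m]) = pstar C \<phi> Xs"
    unfolding pstar_def D_def by (intro arg_cong[where f="sumO C"] map_cong) (auto simp: padd_def nth_append)
  also have "sumO C (map D (map (\<lambda>i. i + ?m) [0..<?m'])) = pstar C \<theta> Xs'"
    unfolding pstar_def D_def by (auto simp: padd_def nth_append intro!: arg_cong[where f="sumO C"])
  finally show ?thesis .
qed

lemma disj_pstar:
  "\<lbrakk>set Xs \<subseteq> Ob C; set Xs' \<subseteq> Ob C; inj_m (length Xs) \<phi>; inj_m (length Xs') \<theta>;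
    img_m (length Xs) \<phi> \<inter> img_m (length Xs') \<theta> = {}\<rbrakk>
   \<Longrightarrow> Defs.disj C (pstar C \<phi> Xs) (pstar C \<theta> Xs')"
  unfolding disj_def using supp_pstar_subset by blast

lemma brk_append:
  assumes Xs: "set Xs \<subseteq> Ob C" and Xs': "set Xs' \<subseteq> Ob C"
    and \<phi>: "inj_m (length Xs) \<phi>" "inj_m (length Xs) \<phi>'"
    and \<theta>: "inj_m (length Xs') \<theta>" "inj_m (length Xs') \<theta>'"
    and d: "img_m (length Xs) \<phi> \<inter> img_m (length Xs') \<theta> = {}"
      "img_m (length Xs) \<phi>' \<inter> img_m (length Xs') \<theta>' = {}"
  shows "brk C (padd (length Xs) \<phi>' \<theta>') (padd (length Xs) \<phi> \<theta>) (Xs @ Xs')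
       = plM C (brk C \<phi>' \<phi> Xs) (brk C \<theta>' \<theta> Xs')"
proof -
  let ?m = "length Xs" and ?m' = "length Xs'"
  define F where "F i = actM C (padd ?m \<phi>' \<theta>' i) (padd ?m \<phi> \<theta> i) (ide C ((Xs @ Xs') ! i))" for i
  have F: "disj_family_hom {0..<length (Xs @ Xs')} (\<lambda>i. actO C (padd ?m \<phi> \<theta> i) ((Xs @ Xs') ! i))
      (\<lambda>i. actO C (padd ?m \<phi>' \<theta>' i) ((Xs @ Xs') ! i)) F"
    unfolding F_def using Xs Xs' inj_m_padd[OF \<phi>(1) \<theta>(1) d(1)] inj_m_padd[OF \<phi>(2) \<theta>(2) d(2)]
    by (intro disj_family_hom_brk_summands) auto
  have "brk C (padd ?m \<phi>' \<theta>') (padd ?m \<phi> \<theta>) (Xs @ Xs')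
      = sumM C (map F ([0..<?m] @ map (\<lambda>i. i + ?m) [0..<?m']))"
    unfolding brk_def F_def by (simp add: upt_add_split[symmetric])
  also have "\<dots> = plM C (sumM C (map F [0..<?m])) (sumM C (map F (map (\<lambda>i. i + ?m) [0..<?m'])))"
    by (rule sumM_append[OF F]) (auto simp: distinct_map inj_on_def)
  also have "sumM C (map F [0..<?m]) = brk C \<phi>' \<phi> Xs"
    unfolding brk_def F_def by (intro arg_cong[where f="sumM C"] map_cong) (auto simp: padd_def nth_append)
  also have "sumM C (map F (map (\<lambda>i. i + ?m) [0..<?m'])) = brk C \<theta>' \<theta> Xs'"
    unfolding brk_def F_def by (auto simp: padd_def nth_append intro!: arg_cong[where f="sumM C"])
  finally show ?thesis .
qed

lemma pstar_permute:
  assumes Zs: "set Zs \<subseteq> Ob C" and \<mu>: "bij_betw \<mu> {..<length Zs} {..<length Zs}"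
    and Xs: "length Xs = length Zs" "\<And>j. j < length Zs \<Longrightarrow> Xs ! j = Zs ! \<mu> j"
    and \<psi>: "inj_m (length Zs) \<psi>"
  shows "pstar C (\<lambda>j. \<psi> (\<mu> j)) Xs = pstar C \<psi> Zs"
proof -
  have "pstar C (\<lambda>j. \<psi> (\<mu> j)) Xs = sumO C (map (\<lambda>k. actO C (\<psi> k) (Zs ! k)) (map \<mu> [0..<length Zs]))"
    unfolding pstar_def Xs(1) map_map comp_def
    by (intro arg_cong[where f="sumO C"] map_cong) (auto simp: Xs(2))
  also have "\<dots> = pstar C \<psi> Zs"
    unfolding pstar_def using \<mu> atLeast0LessThan
    by (intro sumO_perm[OF disj_family_pstar_summands[OF \<psi> Zs]])
       (auto simp: distinct_map bij_betw_def)
  finally show ?thesis .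
qed

lemma brk_permute:
  assumes Zs: "set Zs \<subseteq> Ob C" and \<mu>: "bij_betw \<mu> {..<length Zs} {..<length Zs}"
    and Xs: "length Xs = length Zs" "\<And>j. j < length Zs \<Longrightarrow> Xs ! j = Zs ! \<mu> j"
    and \<psi>: "inj_m (length Zs) \<psi>" "inj_m (length Zs) \<psi>'"
  shows "brk C (\<lambda>j. \<psi>' (\<mu> j)) (\<lambda>j. \<psi> (\<mu> j)) Xs = brk C \<psi>' \<psi> Zs"
proof -
  have "brk C (\<lambda>j. \<psi>' (\<mu> j)) (\<lambda>j. \<psi> (\<mu> j)) Xs
      = sumM C (map (\<lambda>k. actM C (\<psi>' k) (\<psi> k) (ide C (Zs ! k))) (map \<mu> [0..<length Zs]))"
    unfolding brk_def Xs(1) map_map comp_def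
    by (intro arg_cong[where f="sumM C"] map_cong) (auto simp: Xs(2))
  also have "\<dots> = brk C \<psi>' \<psi> Zs"
    unfolding brk_def using \<mu> atLeast0LessThan
    by (intro sumM_perm[OF disj_family_hom_brk_summands[OF \<psi> Zs]])
       (auto simp: distinct_map bij_betw_def)
  finally show ?thesis .
qed

section \<open>Morphisms of \<Sigma>(C) through their representatives\<close>

definition rep_at :: "'o list \<Rightarrow> 'o list \<Rightarrow> (nat \<Rightarrow> nat \<Rightarrow> nat) \<Rightarrow> (nat \<Rightarrow> nat \<Rightarrow> nat) \<Rightarrow> 'm srep \<Rightarrow> 'm"
  where "rep_at Xs Ys \<psi>' \<phi>' t = (case t of (\<psi>, f, \<phi>) \<Rightarrow> cmp C (brk C \<psi>' \<psi> Ys) (cmp C f (brk C \<phi> \<phi>' Xs)))"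

lemma rep_at_simp:
  "rep_at Xs Ys \<psi>' \<phi>' (\<psi>, f, \<phi>) = cmp C (brk C \<psi>' \<psi> Ys) (cmp C f (brk C \<phi> \<phi>' Xs))"
  unfolding rep_at_def by simp

lemma rep_at_cong:
  assumes "\<And>j. j < length Ys \<Longrightarrow> \<psi> j = \<psi>' j" "\<And>j. j < length Xs \<Longrightarrow> \<phi> j = \<phi>' j"
  shows "rep_at Xs Ys \<psi> \<phi> t = rep_at Xs Ys \<psi>' \<phi>' t"
proof -
  obtain \<psi>0 f \<phi>0 where "t = (\<psi>0, f, \<phi>0)" by (cases t)
  moreover have "brk C \<psi> \<psi>0 Ys = brk C \<psi>' \<psi>0 Ys" "brk C \<phi>0 \<phi> Xs = brk C \<phi>0 \<phi>' Xs"
    using assms by (intro brk_cong; simp)+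
  ultimately show ?thesis by (simp add: rep_at_simp)
qed

lemma mem_scls_iff:
  "(\<psi>', f', \<phi>') \<in> scls C Xs Ys t \<longleftrightarrow> rep_ok C Xs Ys (\<psi>', f', \<phi>') \<and> f' = rep_at Xs Ys \<psi>' \<phi>' t"
  unfolding scls_def srel_def rep_at_def by (cases t) simp

lemma rep_okD:
  "rep_ok C Xs Ys (\<psi>, f, \<phi>)
   \<Longrightarrow> inj_m (length Xs) \<phi> \<and> inj_m (length Ys) \<psi> \<and> f \<in> Hom C (pstar C \<phi> Xs) (pstar C \<psi> Ys)"
  and rep_okI:
  "\<lbrakk>inj_m (length Xs) \<phi>; inj_m (length Ys) \<psi>; f \<in> Hom C (pstar C \<phi> Xs) (pstar C \<psi> Ys)\<rbrakk>
   \<Longrightarrow> rep_ok C Xs Ys (\<psi>, f, \<phi>)"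
  unfolding rep_ok_def by simp_all

lemma rep_at_in_hom:
  assumes Xs: "set Xs \<subseteq> Ob C" and Ys: "set Ys \<subseteq> Ob C" and t: "rep_ok C Xs Ys (\<psi>, f, \<phi>)"
    and \<phi>': "inj_m (length Xs) \<phi>'" and \<psi>': "inj_m (length Ys) \<psi>'"
  shows "rep_at Xs Ys \<psi>' \<phi>' (\<psi>, f, \<phi>) \<in> Hom C (pstar C \<phi>' Xs) (pstar C \<psi>' Ys)"
proof -
  have \<phi>: "inj_m (length Xs) \<phi>" and \<psi>: "inj_m (length Ys) \<psi>"
    and f: "f \<in> Hom C (pstar C \<phi> Xs) (pstar C \<psi> Ys)" using rep_okD[OF t] by auto
  note O = pstar_in_Ob[OF \<phi> Xs] pstar_in_Ob[OF \<psi> Ys] pstar_in_Ob[OF \<phi>' Xs] pstar_in_Ob[OF \<psi>' Ys]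
  show ?thesis
    unfolding rep_at_simp
    by (rule cmp_in_hom[OF O(3) O(2) O(4) cmp_in_hom[OF O(3) O(1) O(2) brk_in_hom[OF \<phi>' \<phi> Xs] f]
          brk_in_hom[OF \<psi> \<psi>' Ys]])
qed

lemma rep_at_self:
  assumes Xs: "set Xs \<subseteq> Ob C" and Ys: "set Ys \<subseteq> Ob C" and t: "rep_ok C Xs Ys (\<psi>, f, \<phi>)"
  shows "rep_at Xs Ys \<psi> \<phi> (\<psi>, f, \<phi>) = f"
proof -
  have \<phi>: "inj_m (length Xs) \<phi>" and \<psi>: "inj_m (length Ys) \<psi>"
    and f: "f \<in> Hom C (pstar C \<phi> Xs) (pstar C \<psi> Ys)" using rep_okD[OF t] by auto
  note O = pstar_in_Ob[OF \<phi> Xs] pstar_in_Ob[OF \<psi> Ys]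
  show ?thesis
    unfolding rep_at_simp brk_self[OF \<phi> Xs] brk_self[OF \<psi> Ys]
    using cmp_ide_right[OF O f] cmp_ide_left[OF O f] by simp
qed

lemma rep_at_rep_at:
  assumes Xs: "set Xs \<subseteq> Ob C" and Ys: "set Ys \<subseteq> Ob C" and t: "rep_ok C Xs Ys (\<psi>, f, \<phi>)"
    and \<phi>: "inj_m (length Xs) \<phi>1" "inj_m (length Xs) \<phi>2"
    and \<psi>: "inj_m (length Ys) \<psi>1" "inj_m (length Ys) \<psi>2"
  shows "rep_at Xs Ys \<psi>2 \<phi>2 (\<psi>1, rep_at Xs Ys \<psi>1 \<phi>1 (\<psi>, f, \<phi>), \<phi>1) = rep_at Xs Ys \<psi>2 \<phi>2 (\<psi>, f, \<phi>)"
proof -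
  have \<phi>0: "inj_m (length Xs) \<phi>" and \<psi>0: "inj_m (length Ys) \<psi>"
    and f: "f \<in> Hom C (pstar C \<phi> Xs) (pstar C \<psi> Ys)" using rep_okD[OF t] by auto
  note A = pstar_in_Ob[OF \<phi>0 Xs] pstar_in_Ob[OF \<phi>(1) Xs] pstar_in_Ob[OF \<phi>(2) Xs]
  note B = pstar_in_Ob[OF \<psi>0 Ys] pstar_in_Ob[OF \<psi>(1) Ys] pstar_in_Ob[OF \<psi>(2) Ys]
  note p = brk_in_hom[OF \<phi>(1) \<phi>0 Xs] brk_in_hom[OF \<phi>(2) \<phi>(1) Xs]
  note q = brk_in_hom[OF \<psi>0 \<psi>(1) Ys] brk_in_hom[OF \<psi>(1) \<psi>(2) Ys]
  have fp: "cmp C f (brk C \<phi> \<phi>1 Xs) \<in> Hom C (pstar C \<phi>1 Xs) (pstar C \<psi> Ys)"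
    by (rule cmp_in_hom[OF A(2) A(1) B(1) p(1) f])
  have "cmp C (cmp C (brk C \<psi>1 \<psi> Ys) (cmp C f (brk C \<phi> \<phi>1 Xs))) (brk C \<phi>1 \<phi>2 Xs)
      = cmp C (brk C \<psi>1 \<psi> Ys) (cmp C (cmp C f (brk C \<phi> \<phi>1 Xs)) (brk C \<phi>1 \<phi>2 Xs))"
    by (rule cmp_assoc[OF A(3) A(2) B(1) B(2) p(2) fp q(1), symmetric])
  also have "cmp C (cmp C f (brk C \<phi> \<phi>1 Xs)) (brk C \<phi>1 \<phi>2 Xs) = cmp C f (brk C \<phi> \<phi>2 Xs)"
    using cmp_assoc[OF A(3) A(2) A(1) B(1) p(2) p(1) f] brk_cmp[OF \<phi>(2) \<phi>(1) \<phi>0 Xs] by simp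
  finally have "cmp C (brk C \<psi>2 \<psi>1 Ys) (cmp C (cmp C (brk C \<psi>1 \<psi> Ys) (cmp C f (brk C \<phi> \<phi>1 Xs))) (brk C \<phi>1 \<phi>2 Xs))
      = cmp C (cmp C (brk C \<psi>2 \<psi>1 Ys) (brk C \<psi>1 \<psi> Ys)) (cmp C f (brk C \<phi> \<phi>2 Xs))"
    using cmp_assoc[OF A(3) B(1) B(2) B(3) cmp_in_hom[OF A(3) A(1) B(1) brk_in_hom[OF \<phi>(2) \<phi>0 Xs] f] q]
    by simp
  then show ?thesis
    unfolding rep_at_simp brk_cmp[OF \<psi>0 \<psi>(1) \<psi>(2) Ys] by simp
qed

lemma rep_at_in_scls:
  assumes Xs: "set Xs \<subseteq> Ob C" and Ys: "set Ys \<subseteq> Ob C" and t: "rep_ok C Xs Ys t"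
    and "inj_m (length Xs) \<phi>'" "inj_m (length Ys) \<psi>'"
  shows "(\<psi>', rep_at Xs Ys \<psi>' \<phi>' t, \<phi>') \<in> scls C Xs Ys t"
  using assms rep_at_in_hom[OF Xs Ys] unfolding mem_scls_iff by (cases t) (auto intro: rep_okI)

lemma rep_in_scls: "\<lbrakk>set Xs \<subseteq> Ob C; set Ys \<subseteq> Ob C; rep_ok C Xs Ys t\<rbrakk> \<Longrightarrow> t \<in> scls C Xs Ys t"
  using rep_at_in_scls[of Xs Ys t] rep_at_self[of Xs Ys] rep_okD by (cases t) fastforce

lemma rep_at_scls_member:
  assumes Xs: "set Xs \<subseteq> Ob C" and Ys: "set Ys \<subseteq> Ob C" and t: "rep_ok C Xs Ys t"
    and t1: "t1 \<in> scls C Xs Ys t" and \<phi>': "inj_m (length Xs) \<phi>'" and \<psi>': "inj_m (length Ys) \<psi>'"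
  shows "rep_at Xs Ys \<psi>' \<phi>' t1 = rep_at Xs Ys \<psi>' \<phi>' t"
proof -
  obtain \<psi>1 f1 \<phi>1 where t1_eq: "t1 = (\<psi>1, f1, \<phi>1)" by (cases t1)
  have "rep_ok C Xs Ys (\<psi>1, f1, \<phi>1)" "f1 = rep_at Xs Ys \<psi>1 \<phi>1 t"
    using t1 unfolding t1_eq mem_scls_iff by auto
  then show ?thesis
    unfolding t1_eq using rep_at_rep_at[OF Xs Ys _ _ \<phi>' _ \<psi>'] t rep_okD by (cases t) fastforce
qed

lemma scls_eq:
  assumes Xs: "set Xs \<subseteq> Ob C" and Ys: "set Ys \<subseteq> Ob C" and t: "rep_ok C Xs Ys t"
    and t1: "t1 \<in> scls C Xs Ys t"
  shows "scls C Xs Ys t1 = scls C Xs Ys t"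
proof -
  have "rep_ok C Xs Ys (\<psi>', f', \<phi>') \<Longrightarrow> rep_at Xs Ys \<psi>' \<phi>' t1 = rep_at Xs Ys \<psi>' \<phi>' t" for \<psi>' f' \<phi>'
    using rep_at_scls_member[OF Xs Ys t t1] rep_okD by blast
  then show ?thesis by (auto simp: mem_scls_iff)
qed

lemma scls_ex1:
  assumes "set Xs \<subseteq> Ob C" "set Ys \<subseteq> Ob C" "rep_ok C Xs Ys t"
    and "inj_m (length Xs) \<phi>'" "inj_m (length Ys) \<psi>'"
  shows "\<exists>!f. (\<psi>', f, \<phi>') \<in> scls C Xs Ys t"
  using rep_at_in_scls[OF assms] by (auto simp: mem_scls_iff)

lemma rep_ok_cmp:
  assumes Xs: "set Xs \<subseteq> Ob C" and Ys: "set Ys \<subseteq> Ob C" and Zs: "set Zs \<subseteq> Ob C"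
    and t1: "rep_ok C Xs Ys (\<psi>, f, \<phi>)" and t2: "rep_ok C Ys Zs (\<rho>, g, \<theta>)"
  shows "rep_ok C Xs Zs (\<rho>, cmp C g (cmp C (brk C \<theta> \<psi> Ys) f), \<phi>)"
proof -
  have \<phi>: "inj_m (length Xs) \<phi>" and \<psi>: "inj_m (length Ys) \<psi>"
    and f: "f \<in> Hom C (pstar C \<phi> Xs) (pstar C \<psi> Ys)" using rep_okD[OF t1] by auto
  have \<theta>: "inj_m (length Ys) \<theta>" and \<rho>: "inj_m (length Zs) \<rho>"
    and g: "g \<in> Hom C (pstar C \<theta> Ys) (pstar C \<rho> Zs)" using rep_okD[OF t2] by auto
  note O = pstar_in_Ob[OF \<phi> Xs] pstar_in_Ob[OF \<psi> Ys] pstar_in_Ob[OF \<theta> Ys] pstar_in_Ob[OF \<rho> Zs]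
  show ?thesis
    by (rule rep_okI[OF \<phi> \<rho> cmp_in_hom[OF O(1) O(3) O(4) cmp_in_hom[OF O(1) O(2) O(3) f
          brk_in_hom[OF \<psi> \<theta> Ys]] g]])
qed

text \<open>Composition of representatives is compatible with reindexing; this makes the
  composition of \<Sigma>(C) independent of the chosen representatives.\<close>
lemma rep_at_cmp:
  assumes Xs: "set Xs \<subseteq> Ob C" and Ys: "set Ys \<subseteq> Ob C" and Zs: "set Zs \<subseteq> Ob C"
    and t1: "rep_ok C Xs Ys (\<psi>, f, \<phi>)" and t2: "rep_ok C Ys Zs (\<rho>, g, \<theta>)"
    and \<phi>': "inj_m (length Xs) \<phi>'" and \<psi>': "inj_m (length Ys) \<psi>'"
    and \<theta>': "inj_m (length Ys) \<theta>'" and \<rho>': "inj_m (length Zs) \<rho>'"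
  shows "rep_at Xs Zs \<rho>' \<phi>' (\<rho>, cmp C g (cmp C (brk C \<theta> \<psi> Ys) f), \<phi>)
       = cmp C (rep_at Ys Zs \<rho>' \<theta>' (\<rho>, g, \<theta>))
           (cmp C (brk C \<theta>' \<psi>' Ys) (rep_at Xs Ys \<psi>' \<phi>' (\<psi>, f, \<phi>)))"
proof -
  have \<phi>: "inj_m (length Xs) \<phi>" and \<psi>: "inj_m (length Ys) \<psi>"
    and f: "f \<in> Hom C (pstar C \<phi> Xs) (pstar C \<psi> Ys)" using rep_okD[OF t1] by auto
  have \<theta>: "inj_m (length Ys) \<theta>" and \<rho>: "inj_m (length Zs) \<rho>"
    and g: "g \<in> Hom C (pstar C \<theta> Ys) (pstar C \<rho> Zs)" using rep_okD[OF t2] by auto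
  define p where "p = brk C \<phi> \<phi>' Xs"
  define q where "q = brk C \<psi>' \<psi> Ys"
  define b where "b = brk C \<theta>' \<psi>' Ys"
  define r where "r = brk C \<theta> \<theta>' Ys"
  define s where "s = brk C \<rho>' \<rho> Zs"
  note A = pstar_in_Ob[OF \<phi>' Xs] pstar_in_Ob[OF \<phi> Xs]
  note B = pstar_in_Ob[OF \<psi> Ys] pstar_in_Ob[OF \<psi>' Ys]
  note T = pstar_in_Ob[OF \<theta>' Ys] pstar_in_Ob[OF \<theta> Ys]
  note D = pstar_in_Ob[OF \<rho> Zs] pstar_in_Ob[OF \<rho>' Zs]
  have p: "p \<in> Hom C (pstar C \<phi>' Xs) (pstar C \<phi> Xs)" unfolding p_def by (rule brk_in_hom[OF \<phi>' \<phi> Xs])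
  have q: "q \<in> Hom C (pstar C \<psi> Ys) (pstar C \<psi>' Ys)" unfolding q_def by (rule brk_in_hom[OF \<psi> \<psi>' Ys])
  have b: "b \<in> Hom C (pstar C \<psi>' Ys) (pstar C \<theta>' Ys)" unfolding b_def by (rule brk_in_hom[OF \<psi>' \<theta>' Ys])
  have r: "r \<in> Hom C (pstar C \<theta>' Ys) (pstar C \<theta> Ys)" unfolding r_def by (rule brk_in_hom[OF \<theta>' \<theta> Ys])
  have fp: "cmp C f p \<in> Hom C (pstar C \<phi>' Xs) (pstar C \<psi> Ys)" by (rule cmp_in_hom[OF A B(1) p f])
  have qfp: "cmp C q (cmp C f p) \<in> Hom C (pstar C \<phi>' Xs) (pstar C \<psi>' Ys)"
    by (rule cmp_in_hom[OF A(1) B fp q])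
  have bqfp: "cmp C b (cmp C q (cmp C f p)) \<in> Hom C (pstar C \<phi>' Xs) (pstar C \<theta>' Ys)"
    by (rule cmp_in_hom[OF A(1) B(2) T(1) qfp b])
  have "cmp C r (cmp C b (cmp C q (cmp C f p))) = cmp C (cmp C r b) (cmp C q (cmp C f p))"
    by (rule cmp_assoc[OF A(1) B(2) T qfp b r])
  also have "cmp C r b = brk C \<theta> \<psi>' Ys"
    unfolding r_def b_def by (rule brk_cmp[OF \<psi>' \<theta>' \<theta> Ys])
  also have "cmp C (brk C \<theta> \<psi>' Ys) (cmp C q (cmp C f p)) = cmp C (cmp C (brk C \<theta> \<psi>' Ys) q) (cmp C f p)"
    by (rule cmp_assoc[OF A(1) B T(2) fp q brk_in_hom[OF \<psi>' \<theta> Ys]])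
  also have "cmp C (brk C \<theta> \<psi>' Ys) q = brk C \<theta> \<psi> Ys"
    unfolding q_def by (rule brk_cmp[OF \<psi> \<psi>' \<theta> Ys])
  also have "cmp C (brk C \<theta> \<psi> Ys) (cmp C f p) = cmp C (cmp C (brk C \<theta> \<psi> Ys) f) p"
    by (rule cmp_assoc[OF A B(1) T(2) p f brk_in_hom[OF \<psi> \<theta> Ys]])
  finally have middle: "cmp C r (cmp C b (cmp C q (cmp C f p))) = cmp C (cmp C (brk C \<theta> \<psi> Ys) f) p" .
  have hf: "cmp C (brk C \<theta> \<psi> Ys) f \<in> Hom C (pstar C \<phi> Xs) (pstar C \<theta> Ys)"
    by (rule cmp_in_hom[OF A(2) B(1) T(2) f brk_in_hom[OF \<psi> \<theta> Ys]])
  have gr: "cmp C g r \<in> Hom C (pstar C \<theta>' Ys) (pstar C \<rho> Zs)" by (rule cmp_in_hom[OF T D(1) r g])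
  have "cmp C (cmp C s (cmp C g r)) (cmp C b (cmp C q (cmp C f p)))
      = cmp C s (cmp C (cmp C g r) (cmp C b (cmp C q (cmp C f p))))"
    unfolding s_def by (rule cmp_assoc[OF A(1) T(1) D bqfp gr brk_in_hom[OF \<rho> \<rho>' Zs], symmetric])
  also have "cmp C (cmp C g r) (cmp C b (cmp C q (cmp C f p))) = cmp C g (cmp C r (cmp C b (cmp C q (cmp C f p))))"
    by (rule cmp_assoc[OF A(1) T D(1) bqfp r g, symmetric])
  also have "\<dots> = cmp C (cmp C g (cmp C (brk C \<theta> \<psi> Ys) f)) p"
    unfolding middle by (rule cmp_assoc[OF A T(2) D(1) p hf g])
  finally show ?thesis
    unfolding rep_at_simp p_def[symmetric] q_def[symmetric] b_def[symmetric] r_def[symmetric] s_def[symmetric]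
    by simp
qed

lemma scomp_eq:
  assumes Xs: "set Xs \<subseteq> Ob C" and Ys: "set Ys \<subseteq> Ob C" and Zs: "set Zs \<subseteq> Ob C"
    and t1: "rep_ok C Xs Ys t1" and t2: "rep_ok C Ys Zs t2"
    and m1: "(\<psi>, f, \<phi>) \<in> scls C Xs Ys t1" and m2: "(\<rho>, g, \<theta>) \<in> scls C Ys Zs t2"
  shows "scomp C (Ys, Zs, scls C Ys Zs t2) (Xs, Ys, scls C Xs Ys t1)
       = (Xs, Zs, scls C Xs Zs (\<rho>, cmp C g (cmp C (brk C \<theta> \<psi> Ys) f), \<phi>))"
proof -
  obtain \<psi>1 f1 \<phi>1 where c1: "(SOME t. t \<in> scls C Xs Ys t1) = (\<psi>1, f1, \<phi>1)" by (metis prod_cases3)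
  obtain \<rho>1 g1 \<theta>1 where c2: "(SOME t. t \<in> scls C Ys Zs t2) = (\<rho>1, g1, \<theta>1)" by (metis prod_cases3)
  have m1': "(\<psi>1, f1, \<phi>1) \<in> scls C Xs Ys t1"
    using someI[where P="\<lambda>t. t \<in> scls C Xs Ys t1", OF rep_in_scls[OF Xs Ys t1]] c1 by simp
  have m2': "(\<rho>1, g1, \<theta>1) \<in> scls C Ys Zs t2"
    using someI[where P="\<lambda>t. t \<in> scls C Ys Zs t2", OF rep_in_scls[OF Ys Zs t2]] c2 by simp
  have r: "rep_ok C Xs Ys (\<psi>, f, \<phi>)" "rep_ok C Xs Ys (\<psi>1, f1, \<phi>1)"
    "rep_ok C Ys Zs (\<rho>, g, \<theta>)" "rep_ok C Ys Zs (\<rho>1, g1, \<theta>1)"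
    using m1 m1' m2 m2' by (auto simp: mem_scls_iff)
  have f: "f = rep_at Xs Ys \<psi> \<phi> (\<psi>1, f1, \<phi>1)"
    using rep_at_scls_member[OF Xs Ys t1 m1'] rep_okD[OF r(1)] m1 rep_at_self[OF Xs Ys r(1)]
    by (metis mem_scls_iff)
  have g: "g = rep_at Ys Zs \<rho> \<theta> (\<rho>1, g1, \<theta>1)"
    using rep_at_scls_member[OF Ys Zs t2 m2'] rep_okD[OF r(3)] m2 rep_at_self[OF Ys Zs r(3)]
    by (metis mem_scls_iff)
  let ?c = "(\<rho>1, cmp C g1 (cmp C (brk C \<theta>1 \<psi>1 Ys) f1), \<phi>1)"
  have c: "rep_ok C Xs Zs ?c" by (rule rep_ok_cmp[OF Xs Ys Zs r(2,4)])
  have "(\<rho>, cmp C g (cmp C (brk C \<theta> \<psi> Ys) f), \<phi>) \<in> scls C Xs Zs ?c"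
    unfolding mem_scls_iff
    using rep_ok_cmp[OF Xs Ys Zs r(1,3)] rep_at_cmp[OF Xs Ys Zs r(2,4), of \<phi> \<psi> \<theta> \<rho>]
      rep_okD[OF r(1)] rep_okD[OF r(3)]
    by (simp add: f g)
  then show ?thesis
    unfolding scomp_def using c1 c2 scls_eq[OF Xs Zs c] by simp
qed

lemma scomp_matching:
  assumes Xs: "set Xs \<subseteq> Ob C" and Ys: "set Ys \<subseteq> Ob C" and Zs: "set Zs \<subseteq> Ob C"
    and t1: "rep_ok C Xs Ys t1" and t2: "rep_ok C Ys Zs t2"
    and m1: "(\<psi>, f, \<phi>) \<in> scls C Xs Ys t1" and m2: "(\<rho>, g, \<psi>) \<in> scls C Ys Zs t2"
  shows "scomp C (Ys, Zs, scls C Ys Zs t2) (Xs, Ys, scls C Xs Ys t1) = (Xs, Zs, scls C Xs Zs (\<rho>, cmp C g f, \<phi>))"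
proof -
  have "rep_ok C Xs Ys (\<psi>, f, \<phi>)" using m1 unfolding mem_scls_iff by blast
  then have "cmp C (brk C \<psi> \<psi> Ys) f = f"
    using brk_self[OF _ Ys] cmp_ide_left pstar_in_Ob Xs Ys rep_okD by metis
  then show ?thesis using scomp_eq[OF assms] by simp
qed

lemma rep_ok_tensor:
  assumes Xs: "set Xs \<subseteq> Ob C" "set Xs' \<subseteq> Ob C" and Ys: "set Ys \<subseteq> Ob C" "set Ys' \<subseteq> Ob C"
    and t1: "rep_ok C Xs Ys (\<psi>, f, \<phi>)" and t2: "rep_ok C Xs' Ys' (\<rho>, g, \<theta>)"
    and dX: "img_m (length Xs) \<phi> \<inter> img_m (length Xs') \<theta> = {}"
    and dY: "img_m (length Ys) \<psi> \<inter> img_m (length Ys') \<rho> = {}"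
  shows "rep_ok C (Xs @ Xs') (Ys @ Ys') (padd (length Ys) \<psi> \<rho>, plM C f g, padd (length Xs) \<phi> \<theta>)"
proof -
  have i: "inj_m (length Xs) \<phi>" "inj_m (length Ys) \<psi>" "inj_m (length Xs') \<theta>" "inj_m (length Ys') \<rho>"
    and f: "f \<in> Hom C (pstar C \<phi> Xs) (pstar C \<psi> Ys)" and g: "g \<in> Hom C (pstar C \<theta> Xs') (pstar C \<rho> Ys')"
    using rep_okD[OF t1] rep_okD[OF t2] by auto
  show ?thesis
  proof (rule rep_okI)
    show "inj_m (length (Xs @ Xs')) (padd (length Xs) \<phi> \<theta>)" using inj_m_padd[OF i(1,3) dX] by simp
    show "inj_m (length (Ys @ Ys')) (padd (length Ys) \<psi> \<rho>)" using inj_m_padd[OF i(2,4) dY] by simp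
    show "plM C f g \<in> Hom C (pstar C (padd (length Xs) \<phi> \<theta>) (Xs @ Xs')) (pstar C (padd (length Ys) \<psi> \<rho>) (Ys @ Ys'))"
      unfolding pstar_append[OF Xs i(1,3) dX] pstar_append[OF Ys i(2,4) dY]
      by (rule plM_in_hom[OF pstar_in_Ob[OF i(1) Xs(1)] pstar_in_Ob[OF i(2) Ys(1)] pstar_in_Ob[OF i(3) Xs(2)]
            pstar_in_Ob[OF i(4) Ys(2)] f g disj_pstar[OF Xs i(1,3) dX] disj_pstar[OF Ys i(2,4) dY]])
  qed
qed

lemma plM_cmp_cmp:
  assumes O: "W \<in> Ob C" "X \<in> Ob C" "Y \<in> Ob C" "Z \<in> Ob C" "W' \<in> Ob C" "X' \<in> Ob C" "Y' \<in> Ob C" "Z' \<in> Ob C"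
    and h: "p \<in> Hom C W X" "k \<in> Hom C X Y" "q \<in> Hom C Y Z" "p' \<in> Hom C W' X'" "k' \<in> Hom C X' Y'" "q' \<in> Hom C Y' Z'"
    and d: "Defs.disj C W W'" "Defs.disj C X X'" "Defs.disj C Y Y'" "Defs.disj C Z Z'"
  shows "plM C (cmp C q (cmp C k p)) (cmp C q' (cmp C k' p')) = cmp C (plM C q q') (cmp C (plM C k k') (plM C p p'))"
proof -
  have "plM C (cmp C q (cmp C k p)) (cmp C q' (cmp C k' p')) = cmp C (plM C q q') (plM C (cmp C k p) (cmp C k' p'))"
    by (rule plM_cmp[OF O(1,3,4,5,7,8) cmp_in_hom[OF O(1,2,3) h(1,2)] h(3) cmp_in_hom[OF O(5,6,7) h(4,5)] h(6) d(1,3,4)])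
  also have "plM C (cmp C k p) (cmp C k' p') = cmp C (plM C k k') (plM C p p')"
    by (rule plM_cmp[OF O(1,2,3,5,6,7) h(1,2,4,5) d(1,2,3)])
  finally show ?thesis .
qed

lemma rep_at_tensor:
  assumes Xs: "set Xs \<subseteq> Ob C" "set Xs' \<subseteq> Ob C" and Ys: "set Ys \<subseteq> Ob C" "set Ys' \<subseteq> Ob C"
    and t1: "rep_ok C Xs Ys (\<psi>, f, \<phi>)" and t2: "rep_ok C Xs' Ys' (\<rho>, g, \<theta>)"
    and dX: "img_m (length Xs) \<phi> \<inter> img_m (length Xs') \<theta> = {}"
    and dY: "img_m (length Ys) \<psi> \<inter> img_m (length Ys') \<rho> = {}"
    and i': "inj_m (length Xs) \<phi>'" "inj_m (length Ys) \<psi>'" "inj_m (length Xs') \<theta>'" "inj_m (length Ys') \<rho>'"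
    and dX': "img_m (length Xs) \<phi>' \<inter> img_m (length Xs') \<theta>' = {}"
    and dY': "img_m (length Ys) \<psi>' \<inter> img_m (length Ys') \<rho>' = {}"
  shows "rep_at (Xs @ Xs') (Ys @ Ys') (padd (length Ys) \<psi>' \<rho>') (padd (length Xs) \<phi>' \<theta>')
           (padd (length Ys) \<psi> \<rho>, plM C f g, padd (length Xs) \<phi> \<theta>)
       = plM C (rep_at Xs Ys \<psi>' \<phi>' (\<psi>, f, \<phi>)) (rep_at Xs' Ys' \<rho>' \<theta>' (\<rho>, g, \<theta>))"
proof -
  have i: "inj_m (length Xs) \<phi>" "inj_m (length Ys) \<psi>" "inj_m (length Xs') \<theta>" "inj_m (length Ys') \<rho>"
    and f: "f \<in> Hom C (pstar C \<phi> Xs) (pstar C \<psi> Ys)" and g: "g \<in> Hom C (pstar C \<theta> Xs') (pstar C \<rho> Ys')"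
    using rep_okD[OF t1] rep_okD[OF t2] by auto
  show ?thesis
    unfolding rep_at_simp brk_append[OF Xs i'(1) i(1) i'(3) i(3) dX' dX] brk_append[OF Ys i(2) i'(2) i(4) i'(4) dY dY']
    by (rule plM_cmp_cmp[symmetric, OF pstar_in_Ob[OF i'(1) Xs(1)] pstar_in_Ob[OF i(1) Xs(1)]
        pstar_in_Ob[OF i(2) Ys(1)] pstar_in_Ob[OF i'(2) Ys(1)] pstar_in_Ob[OF i'(3) Xs(2)]
        pstar_in_Ob[OF i(3) Xs(2)] pstar_in_Ob[OF i(4) Ys(2)] pstar_in_Ob[OF i'(4) Ys(2)]
        brk_in_hom[OF i'(1) i(1) Xs(1)] f brk_in_hom[OF i(2) i'(2) Ys(1)]
        brk_in_hom[OF i'(3) i(3) Xs(2)] g brk_in_hom[OF i(4) i'(4) Ys(2)]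
        disj_pstar[OF Xs i'(1,3) dX'] disj_pstar[OF Xs i(1,3) dX] disj_pstar[OF Ys i(2,4) dY]
        disj_pstar[OF Ys i'(2,4) dY']])
qed

lemma stensor_eq:
  assumes Xs: "set Xs \<subseteq> Ob C" "set Xs' \<subseteq> Ob C" and Ys: "set Ys \<subseteq> Ob C" "set Ys' \<subseteq> Ob C"
    and t1: "rep_ok C Xs Ys t1" and t2: "rep_ok C Xs' Ys' t2"
    and m1: "(\<psi>, f, \<phi>) \<in> scls C Xs Ys t1" and m2: "(\<rho>, g, \<theta>) \<in> scls C Xs' Ys' t2"
    and dX: "img_m (length Xs) \<phi> \<inter> img_m (length Xs') \<theta> = {}"
    and dY: "img_m (length Ys) \<psi> \<inter> img_m (length Ys') \<rho> = {}"
  shows "stensor C (Xs, Ys, scls C Xs Ys t1) (Xs', Ys', scls C Xs' Ys' t2)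
     = (Xs @ Xs', Ys @ Ys', scls C (Xs @ Xs') (Ys @ Ys') (padd (length Ys) \<psi> \<rho>, plM C f g, padd (length Xs) \<phi> \<theta>))"
proof -
  define admissible where "admissible = (\<lambda>p. fst p \<in> scls C Xs Ys t1 \<and> snd p \<in> scls C Xs' Ys' t2 \<and>
    (case p of ((\<psi>, f, \<phi>), (\<rho>, g, \<theta>)) \<Rightarrow>
       img_m (length Xs) \<phi> \<inter> img_m (length Xs') \<theta> = {} \<and> img_m (length Ys) \<psi> \<inter> img_m (length Ys') \<rho> = {}))"
  have "admissible ((\<psi>, f, \<phi>), (\<rho>, g, \<theta>))" unfolding admissible_def using m1 m2 dX dY by simp
  then have chosen: "admissible (SOME p. admissible p)" by (rule someI)
  obtain \<psi>1 f1 \<phi>1 \<rho>1 g1 \<theta>1 where c: "(SOME p. admissible p) = ((\<psi>1, f1, \<phi>1), (\<rho>1, g1, \<theta>1))"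
    by (metis prod_cases3 prod.exhaust)
  have m1': "(\<psi>1, f1, \<phi>1) \<in> scls C Xs Ys t1" and m2': "(\<rho>1, g1, \<theta>1) \<in> scls C Xs' Ys' t2"
    and dX1: "img_m (length Xs) \<phi>1 \<inter> img_m (length Xs') \<theta>1 = {}"
    and dY1: "img_m (length Ys) \<psi>1 \<inter> img_m (length Ys') \<rho>1 = {}"
    using chosen unfolding c by (auto simp: admissible_def)
  have r: "rep_ok C Xs Ys (\<psi>, f, \<phi>)" "rep_ok C Xs Ys (\<psi>1, f1, \<phi>1)"
    "rep_ok C Xs' Ys' (\<rho>, g, \<theta>)" "rep_ok C Xs' Ys' (\<rho>1, g1, \<theta>1)"
    using m1 m1' m2 m2' unfolding mem_scls_iff by blast+
  have f: "f = rep_at Xs Ys \<psi> \<phi> (\<psi>1, f1, \<phi>1)"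
    using rep_at_scls_member[OF Xs(1) Ys(1) t1 m1'] rep_okD[OF r(1)] m1 unfolding mem_scls_iff by metis
  have g: "g = rep_at Xs' Ys' \<rho> \<theta> (\<rho>1, g1, \<theta>1)"
    using rep_at_scls_member[OF Xs(2) Ys(2) t2 m2'] rep_okD[OF r(3)] m2 unfolding mem_scls_iff by metis
  let ?c = "(padd (length Ys) \<psi>1 \<rho>1, plM C f1 g1, padd (length Xs) \<phi>1 \<theta>1)"
  have c_ok: "rep_ok C (Xs @ Xs') (Ys @ Ys') ?c" by (rule rep_ok_tensor[OF Xs Ys r(2,4) dX1 dY1])
  have "(padd (length Ys) \<psi> \<rho>, plM C f g, padd (length Xs) \<phi> \<theta>) \<in> scls C (Xs @ Xs') (Ys @ Ys') ?c"
    unfolding mem_scls_iff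
    using rep_ok_tensor[OF Xs Ys r(1,3) dX dY] rep_okD[OF r(1)] rep_okD[OF r(3)]
      rep_at_tensor[OF Xs Ys r(2,4) dX1 dY1 _ _ _ _ dX dY]
    by (simp add: f g)
  then show ?thesis
    unfolding stensor_def using c[unfolded admissible_def] scls_eq[OF _ _ c_ok] Xs Ys by simp
qed

lemma rep_ok_permutation:
  assumes Zs: "set Zs \<subseteq> Ob C" and \<mu>: "bij_betw \<mu> {..<length Zs} {..<length Zs}"
    and Xs: "length Xs = length Zs" "\<And>j. j < length Zs \<Longrightarrow> Xs ! j = Zs ! \<mu> j"
    and \<chi>: "inj_m (length Zs) \<chi>"
  shows "rep_ok C Xs Zs (\<chi>, ide C (pstar C \<chi> Zs), \<lambda>j. \<chi> (\<mu> j))"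
    and "rep_ok C Zs Xs (\<lambda>j. \<chi> (\<mu> j), ide C (pstar C \<chi> Zs), \<chi>)"
  using inj_m_permute[OF \<chi> \<mu>] pstar_permute[OF Zs \<mu> Xs \<chi>] ide_in_hom[OF pstar_in_Ob[OF \<chi> Zs]] \<chi> Xs(1)
  by (auto intro!: rep_okI)

lemma rep_at_permutation:
  assumes Zs: "set Zs \<subseteq> Ob C" and \<mu>: "bij_betw \<mu> {..<length Zs} {..<length Zs}"
    and Xs: "length Xs = length Zs" "\<And>j. j < length Zs \<Longrightarrow> Xs ! j = Zs ! \<mu> j"
    and \<chi>: "inj_m (length Zs) \<chi>" and \<psi>: "inj_m (length Zs) \<psi>"
  shows "rep_at Xs Zs \<psi> (\<lambda>j. \<psi> (\<mu> j)) (\<chi>, ide C (pstar C \<chi> Zs), \<lambda>j. \<chi> (\<mu> j)) = ide C (pstar C \<psi> Zs)"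
    and "rep_at Zs Xs (\<lambda>j. \<psi> (\<mu> j)) \<psi> (\<lambda>j. \<chi> (\<mu> j), ide C (pstar C \<chi> Zs), \<chi>) = ide C (pstar C \<psi> Zs)"
proof -
  have "cmp C (brk C \<psi> \<chi> Zs) (cmp C (ide C (pstar C \<chi> Zs)) (brk C \<chi> \<psi> Zs)) = ide C (pstar C \<psi> Zs)"
    using cmp_ide_left[OF pstar_in_Ob[OF \<psi> Zs] pstar_in_Ob[OF \<chi> Zs] brk_in_hom[OF \<psi> \<chi> Zs]]
      brk_cmp[OF \<psi> \<chi> \<psi> Zs] brk_self[OF \<psi> Zs]
    by simp
  then show "rep_at Xs Zs \<psi> (\<lambda>j. \<psi> (\<mu> j)) (\<chi>, ide C (pstar C \<chi> Zs), \<lambda>j. \<chi> (\<mu> j)) = ide C (pstar C \<psi> Zs)"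
    and "rep_at Zs Xs (\<lambda>j. \<psi> (\<mu> j)) \<psi> (\<lambda>j. \<chi> (\<mu> j), ide C (pstar C \<chi> Zs), \<chi>) = ide C (pstar C \<psi> Zs)"
    by (simp_all add: rep_at_simp brk_permute[OF Zs \<mu> Xs \<psi> \<chi>] brk_permute[OF Zs \<mu> Xs \<chi> \<psi>])
qed

lemma rep_at_identity:
  assumes "set Xs \<subseteq> Ob C" "inj_m (length Xs) \<chi>" "inj_m (length Xs) \<psi>"
  shows "rep_at Xs Xs \<psi> \<psi> (\<chi>, ide C (pstar C \<chi> Xs), \<chi>) = ide C (pstar C \<psi> Xs)"
  using rep_at_permutation(1)[OF assms(1) bij_betw_id[unfolded id_def] refl _ assms(2,3)] by simp

end

section \<open>\<Theta>(C) and the functor S\<close>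

lemma Theta_simps:
  "Ob (Theta C) = {P. theta_obj C P}"
  "Hom (Theta C) P Q = {(P, Q, s) | s. s \<in> SHom C (tens P) (tens Q)}"
  "cmp (Theta C) b a = (case a of (P, Q, s) \<Rightarrow> case b of (Q', R, t) \<Rightarrow> (P, R, scomp C t s))"
  "ide (Theta C) P = (P, P, sid C (tens P))"
  "zro (Theta C) = (\<lambda>i. [])"
  "plO (Theta C) = tplO"
  "plM (Theta C) = tplM C"
  unfolding Theta_def by simp_all

lemma concat_map_singletons: "(\<And>a. a \<in> set xs \<Longrightarrow> P a = [g a]) \<Longrightarrow> concat (map P xs) = map g xs"
  by (induction xs) auto

lemma finite_tsupp: "theta_obj C P \<Longrightarrow> finite (tsupp P)"
  unfolding theta_obj_def by simp

lemma theta_obj_entry: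
  assumes "theta_obj C P" "a \<in> tsupp P"
  shows "P a = [hd (P a)]" "hd (P a) \<in> Ob C"
  using assms unfolding theta_obj_def tsupp_def by force+

lemma tens_eq:
  assumes P: "theta_obj C P"
  shows "tens P = map (\<lambda>a. hd (P a)) (sorted_list_of_set (tsupp P))"
  unfolding tens_def
  by (rule concat_map_singletons, rule theta_obj_entry(1)[OF P]) (simp add: finite_tsupp[OF P])

lemma length_tens: assumes P: "theta_obj C P" shows "length (tens P) = card (tsupp P)"
  using tens_eq[OF P] finite_tsupp[OF P] by simp

lemma set_tens_subset: assumes P: "theta_obj C P" shows "set (tens P) \<subseteq> Ob C"
  using tens_eq[OF P] finite_tsupp[OF P] theta_obj_entry(2)[OF P] by auto

lemma nth_tens:
  assumes P: "theta_obj C P" and i: "i < card (tsupp P)"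
  shows "tens P ! i = hd (P (kappa (tsupp P) i))"
  using tens_eq[OF P] finite_tsupp[OF P] i unfolding kappa_def by simp

lemma kappa_in: "\<lbrakk>finite A; i < card A\<rbrakk> \<Longrightarrow> kappa A i \<in> A"
  unfolding kappa_def by (metis length_sorted_list_of_set nth_mem set_sorted_list_of_set)

lemma kappa_eq_iff: "\<lbrakk>i < card A; j < card A\<rbrakk> \<Longrightarrow> kappa A i = kappa A j \<longleftrightarrow> i = j"
  unfolding kappa_def by (simp add: nth_eq_iff_index_eq)

lemma inj_m_S_rep_src:
  assumes \<phi>: "inj (\<lambda>(i, x). \<phi> i x)" and P: "theta_obj C P"
  shows "inj_m (length (tens P)) (S_rep_src \<phi> P)"
  unfolding inj_m_def length_tens[OF P] S_rep_src_def
proof (rule inj_onI, clarsimp)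
  fix i x j y assume ij: "i < card (tsupp P)" "j < card (tsupp P)"
    and eq: "\<phi> (kappa (tsupp P) i) x = \<phi> (kappa (tsupp P) j) y"
  then have "kappa (tsupp P) i = kappa (tsupp P) j \<and> x = y"
    using injD[OF \<phi>, of "(kappa (tsupp P) i, x)" "(kappa (tsupp P) j, y)"] by simp
  then show "i = j \<and> x = y" using kappa_eq_iff[OF ij] by blast
qed

context parsummable_category
begin

lemma pstar_S_rep_src:
  assumes P: "theta_obj C P"
  shows "pstar C (S_rep_src \<phi> P) (tens P) = S_obj C \<phi> P"
proof -
  have "map (\<lambda>a. actO C (\<phi> a) (hd (P a))) (sorted_list_of_set (tsupp P))
      = map (\<lambda>i. actO C (S_rep_src \<phi> P i) (tens P ! i)) [0..<length (tens P)]"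
    using length_tens[OF P] nth_tens[OF P] finite_tsupp[OF P]
    by (intro nth_equalityI) (auto simp: S_rep_src_def kappa_def)
  then show ?thesis unfolding pstar_def S_obj_def by simp
qed

lemma S_obj_in_Ob: "\<lbrakk>inj (\<lambda>(i, x). \<phi> i x); theta_obj C P\<rbrakk> \<Longrightarrow> S_obj C \<phi> P \<in> Ob C"
  using pstar_in_Ob[OF inj_m_S_rep_src set_tens_subset] pstar_S_rep_src by simp

lemma Theta_homE:
  assumes "a \<in> Hom (Theta C) P Q"
  obtains t where "a = (P, Q, tens P, tens Q, scls C (tens P) (tens Q) t)" "rep_ok C (tens P) (tens Q) t"
  using assms unfolding Theta_simps SHom_def by blast

lemma S_mor_eq:
  assumes \<phi>: "inj (\<lambda>(i, x). \<phi> i x)" and P: "theta_obj C P" and Q: "theta_obj C Q"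
    and t: "rep_ok C (tens P) (tens Q) t"
  shows "S_mor C \<phi> (P, Q, tens P, tens Q, scls C (tens P) (tens Q) t)
       = rep_at (tens P) (tens Q) (S_rep_src \<phi> Q) (S_rep_src \<phi> P) t"
  unfolding S_mor_def
  using rep_at_in_scls[OF set_tens_subset[OF P] set_tens_subset[OF Q] t
      inj_m_S_rep_src[OF \<phi> P] inj_m_S_rep_src[OF \<phi> Q]]
  by (auto simp: mem_scls_iff)

lemma S_mor_in_scls:
  assumes \<phi>: "inj (\<lambda>(i, x). \<phi> i x)" and P: "theta_obj C P" and Q: "theta_obj C Q"
    and t: "rep_ok C (tens P) (tens Q) t"
  shows "(S_rep_src \<phi> Q, S_mor C \<phi> (P, Q, tens P, tens Q, scls C (tens P) (tens Q) t), S_rep_src \<phi> P)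
       \<in> scls C (tens P) (tens Q) t"
  unfolding S_mor_eq[OF assms]
  by (rule rep_at_in_scls[OF set_tens_subset[OF P] set_tens_subset[OF Q] t
        inj_m_S_rep_src[OF \<phi> P] inj_m_S_rep_src[OF \<phi> Q]])

lemma S_mor_in_hom:
  assumes \<phi>: "inj (\<lambda>(i, x). \<phi> i x)" and P: "theta_obj C P" and Q: "theta_obj C Q"
    and t: "rep_ok C (tens P) (tens Q) t"
  shows "S_mor C \<phi> (P, Q, tens P, tens Q, scls C (tens P) (tens Q) t) \<in> Hom C (S_obj C \<phi> P) (S_obj C \<phi> Q)"
  using S_mor_in_scls[OF assms] rep_okD unfolding mem_scls_iff pstar_S_rep_src[OF P, symmetric]
    pstar_S_rep_src[OF Q, symmetric]
  by blast

lemma S_rep_ex1: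
  assumes \<phi>: "inj (\<lambda>(i, x). \<phi> i x)"
  shows "\<forall>P\<in>Ob (Theta C). \<forall>Q\<in>Ob (Theta C). \<forall>a\<in>Hom (Theta C) P Q.
           case a of (P, Q, (Xs, Ys, \<alpha>)) \<Rightarrow> \<exists>!f. (S_rep_src \<phi> Q, f, S_rep_src \<phi> P) \<in> \<alpha>"
proof (intro ballI)
  fix P Q a assume "P \<in> Ob (Theta C)" "Q \<in> Ob (Theta C)" and a: "a \<in> Hom (Theta C) P Q"
  then have P: "theta_obj C P" and Q: "theta_obj C Q" by (simp_all add: Theta_simps)
  obtain t where "a = (P, Q, tens P, tens Q, scls C (tens P) (tens Q) t)" and t: "rep_ok C (tens P) (tens Q) t"
    using Theta_homE[OF a] .
  then show "case a of (P, Q, (Xs, Ys, \<alpha>)) \<Rightarrow> \<exists>!f. (S_rep_src \<phi> Q, f, S_rep_src \<phi> P) \<in> \<alpha>"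
    using scls_ex1[OF set_tens_subset[OF P] set_tens_subset[OF Q] t inj_m_S_rep_src[OF \<phi> P]
        inj_m_S_rep_src[OF \<phi> Q]]
    by simp
qed

lemma S_mor_ide:
  assumes \<phi>: "inj (\<lambda>(i, x). \<phi> i x)" and P: "theta_obj C P"
  shows "S_mor C \<phi> (ide (Theta C) P) = ide C (S_obj C \<phi> P)"
proof -
  note Xs = set_tens_subset[OF P]
  have c: "rep_ok C (tens P) (tens P) (can, ide C (pstar C can (tens P)), can)"
    by (rule rep_okI[OF inj_m_can inj_m_can ide_in_hom[OF pstar_in_Ob[OF inj_m_can Xs]]])
  show ?thesis
    unfolding Theta_simps sid_def S_mor_eq[OF \<phi> P P c]
      rep_at_identity[OF Xs inj_m_can inj_m_S_rep_src[OF \<phi> P]] pstar_S_rep_src[OF P] ..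
qed

lemma S_mor_cmp:
  assumes \<phi>: "inj (\<lambda>(i, x). \<phi> i x)" and P: "theta_obj C P" and Q: "theta_obj C Q" and R: "theta_obj C R"
    and a: "a \<in> Hom (Theta C) P Q" and b: "b \<in> Hom (Theta C) Q R"
  shows "S_mor C \<phi> (cmp (Theta C) b a) = cmp C (S_mor C \<phi> b) (S_mor C \<phi> a)"
proof -
  obtain t1 where a_eq: "a = (P, Q, tens P, tens Q, scls C (tens P) (tens Q) t1)"
    and t1: "rep_ok C (tens P) (tens Q) t1" using Theta_homE[OF a] .
  obtain t2 where b_eq: "b = (Q, R, tens Q, tens R, scls C (tens Q) (tens R) t2)"
    and t2: "rep_ok C (tens Q) (tens R) t2" using Theta_homE[OF b] .
  note Xs = set_tens_subset[OF P] set_tens_subset[OF Q] set_tens_subset[OF R]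
  let ?f = "S_mor C \<phi> a" and ?g = "S_mor C \<phi> b"
  have fg: "cmp C ?g ?f \<in> Hom C (pstar C (S_rep_src \<phi> P) (tens P)) (pstar C (S_rep_src \<phi> R) (tens R))"
    using S_mor_in_hom[OF \<phi> P Q t1] S_mor_in_hom[OF \<phi> Q R t2] S_obj_in_Ob[OF \<phi>] P Q R
    unfolding a_eq b_eq pstar_S_rep_src[OF P] pstar_S_rep_src[OF R] by (blast intro: cmp_in_hom)
  have c: "rep_ok C (tens P) (tens R) (S_rep_src \<phi> R, cmp C ?g ?f, S_rep_src \<phi> P)"
    by (rule rep_okI[OF inj_m_S_rep_src[OF \<phi> P] inj_m_S_rep_src[OF \<phi> R] fg])
  have "cmp (Theta C) b a = (P, R, tens P, tens R, scls C (tens P) (tens R) (S_rep_src \<phi> R, cmp C ?g ?f, S_rep_src \<phi> P))"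
    unfolding Theta_simps a_eq b_eq
    using scomp_matching[OF Xs t1 t2 S_mor_in_scls[OF \<phi> P Q t1] S_mor_in_scls[OF \<phi> Q R t2]] by simp
  then show ?thesis
    using S_mor_eq[OF \<phi> P R c] rep_at_self[OF Xs(1,3) c] by simp
qed

lemma is_functor_S:
  assumes \<phi>: "inj (\<lambda>(i, x). \<phi> i x)"
  shows "is_functor (Theta C) C (S_obj C \<phi>) (S_mor C \<phi>)"
  unfolding is_functor_def
proof (intro conjI ballI)
  fix P assume "P \<in> Ob (Theta C)"
  then show "S_obj C \<phi> P \<in> Ob C" by (simp add: S_obj_in_Ob[OF \<phi>] Theta_simps)
next
  fix P Q a assume "P \<in> Ob (Theta C)" "Q \<in> Ob (Theta C)" and a: "a \<in> Hom (Theta C) P Q"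
  then show "S_mor C \<phi> a \<in> Hom C (S_obj C \<phi> P) (S_obj C \<phi> Q)"
    by (elim Theta_homE) (simp add: S_mor_in_hom[OF \<phi>] Theta_simps)
next
  fix P assume "P \<in> Ob (Theta C)"
  then show "S_mor C \<phi> (ide (Theta C) P) = ide C (S_obj C \<phi> P)"
    by (intro S_mor_ide[OF \<phi>]) (simp add: Theta_simps)
next
  fix P Q R a b assume "P \<in> Ob (Theta C)" "Q \<in> Ob (Theta C)" "R \<in> Ob (Theta C)"
    and "a \<in> Hom (Theta C) P Q" "b \<in> Hom (Theta C) Q R"
  then show "S_mor C \<phi> (cmp (Theta C) b a) = cmp C (S_mor C \<phi> b) (S_mor C \<phi> a)"
    by (intro S_mor_cmp[OF \<phi>]) (simp_all add: Theta_simps)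
qed

end

section \<open>S preserves sums\<close>

lemma pos_kappa:
  assumes U: "finite U" and i: "i < card U"
  shows "pos U (kappa U i) = i"
proof -
  define xs where "xs = sorted_list_of_set U"
  have xs: "sorted_wrt (<) xs" "distinct xs" "length xs = card U" "set xs = U" "sorted xs"
    unfolding xs_def using U by (simp_all add: strict_sorted_list_of_set)
  have "{b \<in> U. b < xs ! i} = (\<lambda>k. xs ! k) ` {..<i}"
  proof (intro equalityI subsetI)
    fix b assume "b \<in> (\<lambda>k. xs ! k) ` {..<i}"
    then obtain k where k: "k < i" "b = xs ! k" by auto
    then show "b \<in> {b \<in> U. b < xs ! i}"
      using i xs sorted_wrt_nth_less[OF xs(1) k(1)] by (auto intro: nth_mem)
  next
    fix b assume b: "b \<in> {b \<in> U. b < xs ! i}"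
    then obtain k where k: "k < length xs" "b = xs ! k" using xs(4) by (auto simp: in_set_conv_nth)
    have "k < i"
    proof (rule ccontr)
      assume "\<not> k < i"
      then have "xs ! i \<le> xs ! k"
        using sorted_nth_mono[OF xs(5) _ k(1)] by simp
      then show False using b k by simp
    qed
    then show "b \<in> (\<lambda>k. xs ! k) ` {..<i}" using k by auto
  qed
  moreover have "inj_on (\<lambda>k. xs ! k) {..<i}"
    using xs(2,3) i by (simp add: inj_on_def nth_eq_iff_index_eq)
  ultimately show ?thesis unfolding pos_def kappa_def xs_def[symmetric] by (simp add: card_image)
qed

lemma kappa_pos:
  assumes U: "finite U" and a: "a \<in> U"
  shows "pos U a < card U" "kappa U (pos U a) = a"
proof -
  obtain i where "i < card U" "kappa U i = a"
    using a U unfolding kappa_def by (metis in_set_conv_nth length_sorted_list_of_set set_sorted_list_of_set)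
  then show "pos U a < card U" "kappa U (pos U a) = a" using pos_kappa[OF U] by auto
qed

lemma tsupp_tplO: "tsupp (tplO P P') = tsupp P \<union> tsupp P'"
  unfolding tsupp_def tplO_def by auto

lemma tplO_eq:
  assumes "tsupp P \<inter> tsupp P' = {}"
  shows "a \<notin> tsupp P' \<Longrightarrow> tplO P P' a = P a" "a \<notin> tsupp P \<Longrightarrow> tplO P P' a = P' a"
  using assms unfolding tsupp_def tplO_def by auto

lemma theta_obj_tplO:
  assumes P: "theta_obj C P" and P': "theta_obj C P'" and d: "tsupp P \<inter> tsupp P' = {}"
  shows "theta_obj C (tplO P P')"
  unfolding theta_obj_def
proof (intro conjI allI)
  show "finite (tsupp (tplO P P'))" unfolding tsupp_tplO using finite_tsupp[OF P] finite_tsupp[OF P'] by simp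
  fix i
  show "tplO P P' i = [] \<or> (\<exists>x\<in>Ob C. tplO P P' i = [x])"
  proof (cases "i \<in> tsupp P")
    case True
    then have "i \<notin> tsupp P'" using d by blast
    then show ?thesis using tplO_eq(1)[OF d] P unfolding theta_obj_def by simp
  next
    case False
    then show ?thesis using tplO_eq(2)[OF d] P' unfolding theta_obj_def by simp
  qed
qed

context parsummable_category
begin

context
  fixes \<phi> :: "nat \<Rightarrow> nat \<Rightarrow> nat" and P P' :: "'o tobj"
  assumes \<phi>: "inj (\<lambda>(i, x). \<phi> i x)" and P: "theta_obj C P" and P': "theta_obj C P'"
    and disjoint: "tsupp P \<inter> tsupp P' = {}"
begin

abbreviation supp_seq where "supp_seq \<equiv> sorted_list_of_set (tsupp P) @ sorted_list_of_set (tsupp P')"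

abbreviation N where "N \<equiv> card (tsupp P \<union> tsupp P')"

lemma finite_tsupp_sum: "finite (tsupp P \<union> tsupp P')"
  using finite_tsupp[OF P] finite_tsupp[OF P'] by simp

lemma theta_obj_sum: "theta_obj C (tplO P P')"
  by (rule theta_obj_tplO[OF P P' disjoint])

lemma length_tens_sum: "length (tens P @ tens P') = N" "length (tens (tplO P P')) = N"
  using length_tens[OF P] length_tens[OF P'] length_tens[OF theta_obj_sum]
    card_Un_disjoint[OF finite_tsupp[OF P] finite_tsupp[OF P'] disjoint]
  by (simp_all add: tsupp_tplO)

lemma supp_seq: "set supp_seq = tsupp P \<union> tsupp P'" "distinct supp_seq" "length supp_seq = N"
  using finite_tsupp[OF P] finite_tsupp[OF P'] disjoint card_Un_disjoint[OF finite_tsupp[OF P] finite_tsupp[OF P']]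
  by auto

lemma ttau: assumes "j < N" shows "ttau P P' j < N" "kappa (tsupp P \<union> tsupp P') (ttau P P' j) = supp_seq ! j"
  using kappa_pos[OF finite_tsupp_sum] nth_mem[of j supp_seq] supp_seq assms unfolding ttau_def by auto

lemma bij_ttau: "bij_betw (ttau P P') {..<N} {..<N}"
proof -
  have "inj_on (ttau P P') {..<N}"
    by (rule inj_onI) (metis lessThan_iff ttau(2) supp_seq(2,3) nth_eq_iff_index_eq)
  moreover have "ttau P P' ` {..<N} \<subseteq> {..<N}" using ttau(1) by auto
  ultimately show ?thesis by (simp add: bij_betw_def endo_inj_surj)
qed

lemma nth_tens_sum:
  assumes j: "j < N"
  shows "(tens P @ tens P') ! j = tens (tplO P P') ! ttau P P' j"
proof -
  have "tens (tplO P P') ! ttau P P' j = hd (tplO P P' (supp_seq ! j))"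
    using nth_tens[OF theta_obj_sum] ttau[OF j] by (simp add: tsupp_tplO)
  also have "\<dots> = (tens P @ tens P') ! j"
  proof (cases "j < card (tsupp P)")
    case True
    then have "supp_seq ! j = kappa (tsupp P) j" "kappa (tsupp P) j \<in> tsupp P"
      using kappa_in[OF finite_tsupp[OF P] True] finite_tsupp[OF P] by (auto simp: nth_append kappa_def)
    moreover from this(2) have "kappa (tsupp P) j \<notin> tsupp P'" using disjoint by blast
    ultimately show ?thesis
      using True nth_tens[OF P True] tplO_eq(1)[OF disjoint] length_tens[OF P]
      by (simp add: nth_append)
  next
    case False
    define k where "k = j - card (tsupp P)"
    have k: "k < card (tsupp P')"
      using j False card_Un_disjoint[OF finite_tsupp[OF P] finite_tsupp[OF P'] disjoint] unfolding k_def by simp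
    then have "supp_seq ! j = kappa (tsupp P') k" "kappa (tsupp P') k \<in> tsupp P'"
      using kappa_in[OF finite_tsupp[OF P'] k] finite_tsupp[OF P] False
      by (auto simp: nth_append kappa_def k_def)
    moreover from this(2) have "kappa (tsupp P') k \<notin> tsupp P" using disjoint by blast
    ultimately show ?thesis
      using False nth_tens[OF P' k] tplO_eq(2)[OF disjoint] length_tens[OF P]
      by (simp add: nth_append k_def)
  qed
  finally show ?thesis by simp
qed

lemma padd_S_rep_src:
  assumes j: "j < N"
  shows "padd (length (tens P)) (S_rep_src \<phi> P) (S_rep_src \<phi> P') j = S_rep_src \<phi> (tplO P P') (ttau P P' j)"
  using ttau(2)[OF j] finite_tsupp[OF P] length_tens[OF P]
  by (auto simp: S_rep_src_def padd_def tsupp_tplO kappa_def nth_append)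

lemma img_S_rep_src_disjoint:
  "img_m (length (tens P)) (S_rep_src \<phi> P) \<inter> img_m (length (tens P')) (S_rep_src \<phi> P') = {}"
proof -
  have False if i: "i < card (tsupp P)" and j: "j < card (tsupp P')"
    and eq: "\<phi> (kappa (tsupp P) i) x = \<phi> (kappa (tsupp P') j) y" for i j x y
  proof -
    have "kappa (tsupp P) i = kappa (tsupp P') j"
      using injD[OF \<phi>, of "(kappa (tsupp P) i, x)" "(kappa (tsupp P') j, y)"] eq by simp
    then show False
      using kappa_in[OF finite_tsupp[OF P] i] kappa_in[OF finite_tsupp[OF P'] j] disjoint by auto
  qed
  then show ?thesis
    unfolding img_m_def S_rep_src_def length_tens[OF P] length_tens[OF P'] by fastforce
qed

lemmas inj_m_S_rep_src_sum =
  inj_m_S_rep_src[OF \<phi> P] inj_m_S_rep_src[OF \<phi> P'] inj_m_S_rep_src[OF \<phi> theta_obj_sum]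

lemma set_tens_sum: "set (tens P @ tens P') \<subseteq> Ob C" "set (tens (tplO P P')) \<subseteq> Ob C"
  using set_tens_subset[OF P] set_tens_subset[OF P'] set_tens_subset[OF theta_obj_sum] by auto

lemma inj_m_padd_S_rep_src:
  "inj_m (length (tens P @ tens P')) (padd (length (tens P)) (S_rep_src \<phi> P) (S_rep_src \<phi> P'))"
  using inj_m_padd[OF inj_m_S_rep_src_sum(1,2) img_S_rep_src_disjoint] by simp

lemmas permutation_sum = set_tens_sum(2) bij_ttau[folded length_tens_sum(2)]
  length_tens_sum(1)[folded length_tens_sum(2)] nth_tens_sum[folded length_tens_sum(2)]

lemma pstar_padd_S_rep_src:
  "pstar C (padd (length (tens P)) (S_rep_src \<phi> P) (S_rep_src \<phi> P')) (tens P @ tens P') = S_obj C \<phi> (tplO P P')"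
proof -
  have "pstar C (padd (length (tens P)) (S_rep_src \<phi> P) (S_rep_src \<phi> P')) (tens P @ tens P')
      = pstar C (\<lambda>j. S_rep_src \<phi> (tplO P P') (ttau P P' j)) (tens P @ tens P')"
    using padd_S_rep_src length_tens_sum(1) by (intro pstar_cong) simp
  also have "\<dots> = S_obj C \<phi> (tplO P P')"
    using pstar_permute[OF permutation_sum inj_m_S_rep_src_sum(3)] pstar_S_rep_src[OF theta_obj_sum] by simp
  finally show ?thesis .
qed

lemma S_obj_tplO: "S_obj C \<phi> (tplO P P') = plO C (S_obj C \<phi> P) (S_obj C \<phi> P')"
  using pstar_append[OF set_tens_subset[OF P] set_tens_subset[OF P'] inj_m_S_rep_src_sum(1,2)
      img_S_rep_src_disjoint]
  by (simp add: pstar_padd_S_rep_src pstar_S_rep_src[OF P] pstar_S_rep_src[OF P'])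

lemma disj_S_obj: "Defs.disj C (S_obj C \<phi> P) (S_obj C \<phi> P')"
  using disj_pstar[OF set_tens_subset[OF P] set_tens_subset[OF P'] inj_m_S_rep_src_sum(1,2)
      img_S_rep_src_disjoint]
  by (simp add: pstar_S_rep_src[OF P] pstar_S_rep_src[OF P'])

lemma rep_ok_coh_S_rep:
  "rep_ok C (tens P @ tens P') (tens (tplO P P'))
     (S_rep_src \<phi> (tplO P P'), ide C (S_obj C \<phi> (tplO P P')), padd (length (tens P)) (S_rep_src \<phi> P) (S_rep_src \<phi> P'))"
  and rep_ok_cohinv_S_rep:
  "rep_ok C (tens (tplO P P')) (tens P @ tens P')
     (padd (length (tens P)) (S_rep_src \<phi> P) (S_rep_src \<phi> P'), ide C (S_obj C \<phi> (tplO P P')), S_rep_src \<phi> (tplO P P'))"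
  using inj_m_padd_S_rep_src inj_m_S_rep_src_sum(3) ide_in_hom[OF S_obj_in_Ob[OF \<phi> theta_obj_sum]]
  by (auto intro!: rep_okI simp: pstar_padd_S_rep_src pstar_S_rep_src[OF theta_obj_sum])

lemma coh_S_rep:
  "coh C P P' = (tens P @ tens P', tens (tplO P P'), scls C (tens P @ tens P') (tens (tplO P P'))
     (S_rep_src \<phi> (tplO P P'), ide C (S_obj C \<phi> (tplO P P')), padd (length (tens P)) (S_rep_src \<phi> P) (S_rep_src \<phi> P')))"
proof -
  let ?t = "(can, ide C (pstar C can (tens (tplO P P'))), \<lambda>j. can (ttau P P' j))"
  have t: "rep_ok C (tens P @ tens P') (tens (tplO P P')) ?t"
    by (rule rep_ok_permutation(1)[OF permutation_sum inj_m_can])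
  have "rep_at (tens P @ tens P') (tens (tplO P P')) (S_rep_src \<phi> (tplO P P'))
      (padd (length (tens P)) (S_rep_src \<phi> P) (S_rep_src \<phi> P')) ?t
      = rep_at (tens P @ tens P') (tens (tplO P P')) (S_rep_src \<phi> (tplO P P'))
      (\<lambda>j. S_rep_src \<phi> (tplO P P') (ttau P P' j)) ?t"
    by (rule rep_at_cong) (simp_all add: padd_S_rep_src length_tens_sum(1)[simplified])
  also have "\<dots> = ide C (S_obj C \<phi> (tplO P P'))"
    using rep_at_permutation(1)[OF permutation_sum inj_m_can inj_m_S_rep_src_sum(3)]
    by (simp add: pstar_S_rep_src[OF theta_obj_sum])
  finally have "(S_rep_src \<phi> (tplO P P'), ide C (S_obj C \<phi> (tplO P P')),
      padd (length (tens P)) (S_rep_src \<phi> P) (S_rep_src \<phi> P')) \<in> scls C (tens P @ tens P') (tens (tplO P P')) ?t"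
    using rep_at_in_scls[OF set_tens_sum t inj_m_padd_S_rep_src inj_m_S_rep_src_sum(3)] by simp
  then show ?thesis
    unfolding coh_def using scls_eq[OF set_tens_sum t] by simp
qed

lemma cohinv_S_rep:
  "cohinv C P P' = (tens (tplO P P'), tens P @ tens P', scls C (tens (tplO P P')) (tens P @ tens P')
     (padd (length (tens P)) (S_rep_src \<phi> P) (S_rep_src \<phi> P'), ide C (S_obj C \<phi> (tplO P P')), S_rep_src \<phi> (tplO P P')))"
proof -
  let ?t = "(\<lambda>j. can (ttau P P' j), ide C (pstar C can (tens (tplO P P'))), can)"
  have t: "rep_ok C (tens (tplO P P')) (tens P @ tens P') ?t"
    by (rule rep_ok_permutation(2)[OF permutation_sum inj_m_can])
  have "rep_at (tens (tplO P P')) (tens P @ tens P') (padd (length (tens P)) (S_rep_src \<phi> P) (S_rep_src \<phi> P'))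
      (S_rep_src \<phi> (tplO P P')) ?t
      = rep_at (tens (tplO P P')) (tens P @ tens P') (\<lambda>j. S_rep_src \<phi> (tplO P P') (ttau P P' j))
      (S_rep_src \<phi> (tplO P P')) ?t"
    by (rule rep_at_cong) (simp_all add: padd_S_rep_src length_tens_sum(1)[simplified])
  also have "\<dots> = ide C (S_obj C \<phi> (tplO P P'))"
    using rep_at_permutation(2)[OF permutation_sum inj_m_can inj_m_S_rep_src_sum(3)]
    by (simp add: pstar_S_rep_src[OF theta_obj_sum])
  finally have "(padd (length (tens P)) (S_rep_src \<phi> P) (S_rep_src \<phi> P'), ide C (S_obj C \<phi> (tplO P P')),
      S_rep_src \<phi> (tplO P P')) \<in> scls C (tens (tplO P P')) (tens P @ tens P') ?t"
    using rep_at_in_scls[OF set_tens_sum(2,1) t inj_m_S_rep_src_sum(3) inj_m_padd_S_rep_src] by simp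
  then show ?thesis
    unfolding cohinv_def using scls_eq[OF set_tens_sum(2,1) t] by simp
qed

end

lemma S_mor_tplM:
  assumes \<phi>: "inj (\<lambda>(i, x). \<phi> i x)"
    and P: "theta_obj C P" and Q: "theta_obj C Q" and P': "theta_obj C P'" and Q': "theta_obj C Q'"
    and dP: "tsupp P \<inter> tsupp P' = {}" and dQ: "tsupp Q \<inter> tsupp Q' = {}"
    and a: "a \<in> Hom (Theta C) P Q" and b: "b \<in> Hom (Theta C) P' Q'"
  shows "S_mor C \<phi> (tplM C a b) = plM C (S_mor C \<phi> a) (S_mor C \<phi> b)"
proof -
  obtain t1 where a_eq: "a = (P, Q, tens P, tens Q, scls C (tens P) (tens Q) t1)"
    and t1: "rep_ok C (tens P) (tens Q) t1" using Theta_homE[OF a] .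
  obtain t2 where b_eq: "b = (P', Q', tens P', tens Q', scls C (tens P') (tens Q') t2)"
    and t2: "rep_ok C (tens P') (tens Q') t2" using Theta_homE[OF b] .
  let ?f = "S_mor C \<phi> a" and ?g = "S_mor C \<phi> b"
  let ?XX = "tens P @ tens P'" and ?YY = "tens Q @ tens Q'"
  let ?Z = "tens (tplO P P')" and ?W = "tens (tplO Q Q')"
  let ?sP = "padd (length (tens P)) (S_rep_src \<phi> P) (S_rep_src \<phi> P')"
  let ?sQ = "padd (length (tens Q)) (S_rep_src \<phi> Q) (S_rep_src \<phi> Q')"
  note Xs = set_tens_sum[OF \<phi> P P' dP] set_tens_sum[OF \<phi> Q Q' dQ]
  note SP = S_obj_in_Ob[OF \<phi> theta_obj_sum[OF \<phi> P P' dP]] and SQ = S_obj_in_Ob[OF \<phi> theta_obj_sum[OF \<phi> Q Q' dQ]]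
  have fg: "plM C ?f ?g \<in> Hom C (S_obj C \<phi> (tplO P P')) (S_obj C \<phi> (tplO Q Q'))"
    unfolding S_obj_tplO[OF \<phi> P P' dP] S_obj_tplO[OF \<phi> Q Q' dQ]
    using S_mor_in_hom[OF \<phi> P Q t1] S_mor_in_hom[OF \<phi> P' Q' t2] disj_S_obj[OF \<phi> P P' dP] disj_S_obj[OF \<phi> Q Q' dQ]
    by (intro plM_in_hom) (simp_all add: a_eq b_eq S_obj_in_Ob[OF \<phi>] P Q P' Q')
  have tensor: "rep_ok C ?XX ?YY (?sQ, plM C ?f ?g, ?sP)"
    using inj_m_padd_S_rep_src[OF \<phi> P P' dP] inj_m_padd_S_rep_src[OF \<phi> Q Q' dQ] fg
    by (intro rep_okI) (simp_all add: pstar_padd_S_rep_src[OF \<phi> P P' dP] pstar_padd_S_rep_src[OF \<phi> Q Q' dQ])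
  have after_tensor: "rep_ok C ?Z ?YY (?sQ, plM C ?f ?g, S_rep_src \<phi> (tplO P P'))"
    using inj_m_S_rep_src_sum(3)[OF \<phi> P P' dP] inj_m_padd_S_rep_src[OF \<phi> Q Q' dQ] fg
    by (intro rep_okI) (simp_all add: pstar_S_rep_src theta_obj_sum[OF \<phi> P P' dP] pstar_padd_S_rep_src[OF \<phi> Q Q' dQ])
  have result: "rep_ok C ?Z ?W (S_rep_src \<phi> (tplO Q Q'), plM C ?f ?g, S_rep_src \<phi> (tplO P P'))"
    using inj_m_S_rep_src_sum(3)[OF \<phi> P P' dP] inj_m_S_rep_src_sum(3)[OF \<phi> Q Q' dQ] fg
    by (intro rep_okI) (simp_all add: pstar_S_rep_src theta_obj_sum[OF \<phi> P P' dP] theta_obj_sum[OF \<phi> Q Q' dQ])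
  have "stensor C (tens P, tens Q, scls C (tens P) (tens Q) t1) (tens P', tens Q', scls C (tens P') (tens Q') t2)
      = (?XX, ?YY, scls C ?XX ?YY (?sQ, plM C ?f ?g, ?sP))"
    using stensor_eq[OF set_tens_subset[OF P] set_tens_subset[OF P'] set_tens_subset[OF Q] set_tens_subset[OF Q']
        t1 t2 S_mor_in_scls[OF \<phi> P Q t1] S_mor_in_scls[OF \<phi> P' Q' t2]
        img_S_rep_src_disjoint[OF \<phi> P P' dP] img_S_rep_src_disjoint[OF \<phi> Q Q' dQ]]
    by (simp add: a_eq b_eq)
  moreover have "scomp C (?XX, ?YY, scls C ?XX ?YY (?sQ, plM C ?f ?g, ?sP)) (cohinv C P P')
      = (?Z, ?YY, scls C ?Z ?YY (?sQ, plM C ?f ?g, S_rep_src \<phi> (tplO P P')))"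
    unfolding cohinv_S_rep[OF \<phi> P P' dP]
    using scomp_matching[OF Xs(2,1,3) rep_ok_cohinv_S_rep[OF \<phi> P P' dP] tensor
        rep_in_scls[OF Xs(2,1) rep_ok_cohinv_S_rep[OF \<phi> P P' dP]] rep_in_scls[OF Xs(1,3) tensor]]
      cmp_ide_right[OF SP SQ fg]
    by simp
  moreover have "scomp C (coh C Q Q') (?Z, ?YY, scls C ?Z ?YY (?sQ, plM C ?f ?g, S_rep_src \<phi> (tplO P P')))
      = (?Z, ?W, scls C ?Z ?W (S_rep_src \<phi> (tplO Q Q'), plM C ?f ?g, S_rep_src \<phi> (tplO P P')))"
    unfolding coh_S_rep[OF \<phi> Q Q' dQ]
    using scomp_matching[OF Xs(2,3,4) after_tensor rep_ok_coh_S_rep[OF \<phi> Q Q' dQ]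
        rep_in_scls[OF Xs(2,3) after_tensor] rep_in_scls[OF Xs(3,4) rep_ok_coh_S_rep[OF \<phi> Q Q' dQ]]]
      cmp_ide_left[OF SP SQ fg]
    by simp
  ultimately have "tplM C a b = (tplO P P', tplO Q Q', ?Z, ?W,
      scls C ?Z ?W (S_rep_src \<phi> (tplO Q Q'), plM C ?f ?g, S_rep_src \<phi> (tplO P P')))"
    unfolding tplM_def by (simp add: a_eq b_eq)
  then show ?thesis
    using S_mor_eq[OF \<phi> theta_obj_sum[OF \<phi> P P' dP] theta_obj_sum[OF \<phi> Q Q' dQ] result]
      rep_at_self[OF Xs(2,4) result]
    by simp
qed

lemma preserves_sums_S:
  assumes \<phi>: "inj (\<lambda>(i, x). \<phi> i x)"
  shows "preserves_sums (Theta C) tsupp C (supp C) (S_obj C \<phi>) (S_mor C \<phi>)"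
  unfolding preserves_sums_def
proof (intro conjI ballI impI)
  show "S_obj C \<phi> (zro (Theta C)) = zro C"
    by (simp add: Theta_simps S_obj_def tsupp_def)
next
  fix P P' assume "P \<in> Ob (Theta C)" "P' \<in> Ob (Theta C)" and d: "tsupp P \<inter> tsupp P' = {}"
  then have P: "theta_obj C P" and P': "theta_obj C P'" by (simp_all add: Theta_simps)
  show "supp C (S_obj C \<phi> P) \<inter> supp C (S_obj C \<phi> P') = {}"
    using disj_S_obj[OF \<phi> P P' d] unfolding disj_def .
  show "S_obj C \<phi> (plO (Theta C) P P') = plO C (S_obj C \<phi> P) (S_obj C \<phi> P')"
    unfolding Theta_simps by (rule S_obj_tplO[OF \<phi> P P' d])
next
  fix P Q P' Q' a b
  assume "P \<in> Ob (Theta C)" "Q \<in> Ob (Theta C)" "P' \<in> Ob (Theta C)" "Q' \<in> Ob (Theta C)"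
    and "a \<in> Hom (Theta C) P Q" "b \<in> Hom (Theta C) P' Q'"
    and "tsupp P \<inter> tsupp P' = {}" "tsupp Q \<inter> tsupp Q' = {}"
  then show "S_mor C \<phi> (plM (Theta C) a b) = plM C (S_mor C \<phi> a) (S_mor C \<phi> b)"
    unfolding Theta_simps(7) by (intro S_mor_tplM[OF \<phi>]) (simp_all add: Theta_simps)
qed

end

theorem proposition3p22:
  fixes C :: "('o,'m,'z) pcat_scheme" and \<phi> :: "nat \<Rightarrow> nat \<Rightarrow> nat"
  assumes "parsummable C"
    and "inj (\<lambda>(i, x). \<phi> i x)"
  shows "(\<forall>P\<in>Ob (Theta C). \<forall>Q\<in>Ob (Theta C). \<forall>a\<in>Hom (Theta C) P Q.
            case a of (P, Q, (Xs, Ys, \<alpha>)) \<Rightarrow>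
              \<exists>!f. (S_rep_src \<phi> Q, f, S_rep_src \<phi> P) \<in> \<alpha>)
       \<and> is_functor (Theta C) C (S_obj C \<phi>) (S_mor C \<phi>)
       \<and> preserves_sums (Theta C) tsupp C (supp C) (S_obj C \<phi>) (S_mor C \<phi>)"
proof -
  interpret parsummable_category C by (rule parsummable_category.intro) (fact assms(1))
  show ?thesis using S_rep_ex1[OF assms(2)] is_functor_S[OF assms(2)] preserves_sums_S[OF assms(2)] by blast
qed

end
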